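(* Let $D,D^*\subset\mathbb{R}^2=\mathbb{C}$ be bounded domains, let $1<p<\infty$, and let $\phi\colon D\to D^*$ be a $C^1$-diffeomorphism with $\phi\in W^{1,p}(D,\mathbb{C})$. Then $\phi^{-1}\in W^{1,1}(D^*,\mathbb{C})$ and $$\mathcal{E}_1(\phi^{-1})\le 4\,(\mathrm{Area}(D))^{1-\frac1p}\,\mathcal{E}_p(\phi)^{\frac1p}.$$
   Context: For $f=u+iv\in W^{1,q}(\Omega,\mathbb{C})$, the $q$-energy is $\mathcal{E}_q(f)=\int_\Omega(|\nabla u|^q+|\nabla v|^q)\,d\mu$, with $|\nabla u|=\sqrt{u_x^2+u_y^2}$ and $\mu$ Lebesgue measure. *)

theory Defs
  imports "HOL-Analysis.Analysis"
begin

text \<open>We identify R^2 with the complex plane. For a map f on C, the partial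
derivatives at z are the values of the (real) Frechet derivative on the
basis vectors 1 (x-direction) and i (y-direction).\<close>

definition pdx :: "(complex \<Rightarrow> 'a::real_normed_vector) \<Rightarrow> complex \<Rightarrow> 'a" where
  "pdx f z = frechet_derivative f (at z) 1"

definition pdy :: "(complex \<Rightarrow> 'a::real_normed_vector) \<Rightarrow> complex \<Rightarrow> 'a" where
  "pdy f z = frechet_derivative f (at z) \<i>"

definition C1_map_on :: "(complex \<Rightarrow> complex) \<Rightarrow> complex set \<Rightarrow> bool" where
  "C1_map_on f S \<longleftrightarrow> (\<forall>z\<in>S. f differentiable (at z)) \<and>
     continuous_on S (pdx f) \<and> continuous_on S (pdy f)"

definition C1_diffeomorphism :: "(complex \<Rightarrow> complex) \<Rightarrow> complex set \<Rightarrow> complex set \<Rightarrow> bool" where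
  "C1_diffeomorphism f S T \<longleftrightarrow> bij_betw f S T \<and> C1_map_on f S \<and> C1_map_on (inv_into S f) T"

fun Ck_real :: "nat \<Rightarrow> (complex \<Rightarrow> real) \<Rightarrow> bool" where
  "Ck_real 0 f = continuous_on UNIV f"
| "Ck_real (Suc n) f = ((\<forall>z. f differentiable (at z)) \<and> continuous_on UNIV f \<and>
      Ck_real n (pdx f) \<and> Ck_real n (pdy f))"

definition smooth_real :: "(complex \<Rightarrow> real) \<Rightarrow> bool" where
  "smooth_real f \<longleftrightarrow> (\<forall>n. Ck_real n f)"

definition test_fun :: "complex set \<Rightarrow> (complex \<Rightarrow> real) \<Rightarrow> bool" where
  "test_fun D \<psi> \<longleftrightarrow> smooth_real \<psi> \<and> compact (closure {z. \<psi> z \<noteq> 0}) \<and>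
     closure {z. \<psi> z \<noteq> 0} \<subseteq> D"

definition Lp_on :: "real \<Rightarrow> complex set \<Rightarrow> (complex \<Rightarrow> real) \<Rightarrow> bool" where
  "Lp_on p D h \<longleftrightarrow> set_borel_measurable lebesgue D h \<and>
     set_integrable lebesgue D (\<lambda>z. \<bar>h z\<bar> powr p)"

definition weak_pdx :: "complex set \<Rightarrow> (complex \<Rightarrow> real) \<Rightarrow> (complex \<Rightarrow> real) \<Rightarrow> bool" where
  "weak_pdx D h g \<longleftrightarrow> (\<forall>\<psi>. test_fun D \<psi> \<longrightarrow>
     (LINT z:D|lebesgue. h z * pdx \<psi> z) = - (LINT z:D|lebesgue. g z * \<psi> z))"

definition weak_pdy :: "complex set \<Rightarrow> (complex \<Rightarrow> real) \<Rightarrow> (complex \<Rightarrow> real) \<Rightarrow> bool" where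
  "weak_pdy D h g \<longleftrightarrow> (\<forall>\<psi>. test_fun D \<psi> \<longrightarrow>
     (LINT z:D|lebesgue. h z * pdy \<psi> z) = - (LINT z:D|lebesgue. g z * \<psi> z))"

definition W1p_real :: "real \<Rightarrow> complex set \<Rightarrow> (complex \<Rightarrow> real) \<Rightarrow> bool" where
  "W1p_real p D h \<longleftrightarrow> Lp_on p D h \<and>
     (\<exists>gx gy. Lp_on p D gx \<and> Lp_on p D gy \<and> weak_pdx D h gx \<and> weak_pdy D h gy)"

definition W1p :: "real \<Rightarrow> complex set \<Rightarrow> (complex \<Rightarrow> complex) \<Rightarrow> bool" where
  "W1p p D f \<longleftrightarrow> W1p_real p D (\<lambda>z. Re (f z)) \<and> W1p_real p D (\<lambda>z. Im (f z))"

text \<open>q-energy of f = u + iv on D, for C^1 maps (partials are the classical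
ones, which coincide a.e. with the weak ones).\<close>
definition energy :: "real \<Rightarrow> complex set \<Rightarrow> (complex \<Rightarrow> complex) \<Rightarrow> real" where
  "energy q D f = (LINT z:D|lebesgue.
     (sqrt ((Re (pdx f z))\<^sup>2 + (Re (pdy f z))\<^sup>2)) powr q +
     (sqrt ((Im (pdx f z))\<^sup>2 + (Im (pdy f z))\<^sup>2)) powr q)"

end

theory Submission
  imports Defs "HOL-Computational_Algebra.Polynomial"
begin

text \<open>At z = \<phi> w the derivative of \<psi> = inv \<phi> is the inverse of D\<phi>(w), whose entries
are the cofactors of D\<phi>(w) divided by the Jacobian J. Hence
|J(w)| (|grad Re \<psi>| + |grad Im \<psi>|)(\<phi> w) = |\<phi>_x(w)| + |\<phi>_y(w)|, and the change of variables
z = \<phi> w turns E_1(\<psi>) into the integral of |\<phi>_x| + |\<phi>_y| over D, which Hoelder's inequality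
bounds by Area(D)^(1-1/p) times an L^p norm dominated by 4 E_p(\<phi>)^(1/p).

The W^{1,p} hypothesis enters only through the integrability of the classical derivatives of \<phi>,
which agree almost everywhere with the weak ones by the fundamental lemma of the calculus of
variations (proved with tensor products of exp(-1/x) bumps). The same integrability, together
with integration by parts against test functions, gives \<psi> in W^{1,1}.\<close>

section \<open>Change of variables in the complex plane\<close>

text \<open>The library's change of variables theorem lives on \<open>real^'n\<close>; we transport it to
\<open>complex\<close>.\<close>

definition complex_of_vec2 :: "real^2 \<Rightarrow> complex" where
  "complex_of_vec2 x = Complex (x$1) (x$2)"

definition vec2_of_complex :: "complex \<Rightarrow> real^2" where
  "vec2_of_complex z = vector [Re z, Im z]"

lemma complex_of_vec2_inverse [simp]: "complex_of_vec2 (vec2_of_complex z) = z"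
  by (simp add: complex_of_vec2_def vec2_of_complex_def complex_eq_iff)

lemma vec2_of_complex_inverse [simp]: "vec2_of_complex (complex_of_vec2 x) = x"
  by (simp add: complex_of_vec2_def vec2_of_complex_def vec_eq_iff forall_2)

lemma bounded_linear_complex_of_vec2: "bounded_linear complex_of_vec2"
  by (auto intro!: linearI simp: linear_conv_bounded_linear[symmetric] complex_of_vec2_def complex_eq_iff)

lemma bounded_linear_vec2_of_complex: "bounded_linear vec2_of_complex"
  by (auto intro!: linearI simp: linear_conv_bounded_linear[symmetric] vec2_of_complex_def vec_eq_iff forall_2)

lemma measurable_complex_of_vec2 [measurable]: "complex_of_vec2 \<in> borel \<rightarrow>\<^sub>M borel"
  by (intro borel_measurable_continuous_onI linear_continuous_on bounded_linear_complex_of_vec2)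

lemma Basis_real2: "(Basis :: (real^2) set) = {axis 1 1, axis 2 1}"
  by (auto simp: Basis_vec_def UNIV_2)

lemma distr_complex_of_vec2_lborel: "distr lborel borel complex_of_vec2 = (lborel :: complex measure)"
proof (rule lborel_eqI[symmetric])
  fix l u :: complex assume le: "\<And>b. b \<in> Basis \<Longrightarrow> l \<bullet> b \<le> u \<bullet> b"
  have preimage: "complex_of_vec2 -` box l u = box (vec2_of_complex l) (vec2_of_complex u)"
    by (auto simp: box_def Basis_complex_def complex_of_vec2_def vec2_of_complex_def
        Basis_vec_def inner_axis forall_2)
  have le2: "Re l \<le> Re u" "Im l \<le> Im u"
    using le[of 1] le[of \<i>] by (auto simp: Basis_complex_def)
  have "emeasure lborel (box (vec2_of_complex l) (vec2_of_complex u))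
      = (\<Prod>b\<in>Basis. (vec2_of_complex u - vec2_of_complex l) \<bullet> b)"
    using le2 by (intro emeasure_lborel_box) (auto simp: Basis_real2 inner_axis vec2_of_complex_def)
  also have "\<dots> = (Re u - Re l) * (Im u - Im l)"
    by (simp add: Basis_real2 axis_eq_axis inner_axis vec2_of_complex_def)
  finally show "emeasure (distr lborel borel complex_of_vec2) (box l u) = (\<Prod>b\<in>Basis. (u - l) \<bullet> b)"
    by (simp add: emeasure_distr preimage Basis_complex_def ennreal_mult' le2)
qed simp

lemma
  fixes F :: "complex \<Rightarrow> real"
  assumes [measurable]: "F \<in> borel_measurable borel"
  shows integrable_complex_of_vec2_iff:
      "integrable lebesgue (\<lambda>y. F (complex_of_vec2 y)) \<longleftrightarrow> integrable lebesgue F"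
    and integral_complex_of_vec2:
      "integral\<^sup>L lebesgue (\<lambda>y. F (complex_of_vec2 y)) = integral\<^sup>L lebesgue F"
proof -
  have [measurable]: "(\<lambda>y. F (complex_of_vec2 y)) \<in> borel_measurable borel" by measurable
  show "integrable lebesgue (\<lambda>y. F (complex_of_vec2 y)) \<longleftrightarrow> integrable lebesgue F"
    using integrable_distr_eq[of complex_of_vec2 lborel borel F]
    by (simp add: distr_complex_of_vec2_lborel integrable_completion)
  show "integral\<^sup>L lebesgue (\<lambda>y. F (complex_of_vec2 y)) = integral\<^sup>L lebesgue F"
    using integral_distr[of complex_of_vec2 lborel borel F]
    by (simp add: distr_complex_of_vec2_lborel integral_completion)
qed

lemma
  fixes f :: "complex \<Rightarrow> real"
  assumes "open S" "continuous_on S f"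
  shows set_integrable_complex_of_vec2_iff:
      "set_integrable lebesgue (complex_of_vec2 -` S) (\<lambda>y. f (complex_of_vec2 y))
         \<longleftrightarrow> set_integrable lebesgue S f"
    and set_integral_complex_of_vec2:
      "(LINT y:complex_of_vec2 -` S|lebesgue. f (complex_of_vec2 y)) = (LINT x:S|lebesgue. f x)"
proof -
  have m: "(\<lambda>x. indicator S x *\<^sub>R f x) \<in> borel_measurable borel"
    using assms by (intro borel_measurable_continuous_on_indicator) auto
  have eq: "(\<lambda>y. indicator (complex_of_vec2 -` S) y *\<^sub>R f (complex_of_vec2 y))
      = (\<lambda>y. (\<lambda>x. indicator S x *\<^sub>R f x) (complex_of_vec2 y))"
    by (auto simp: indicator_def)
  show "set_integrable lebesgue (complex_of_vec2 -` S) (\<lambda>y. f (complex_of_vec2 y))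
      \<longleftrightarrow> set_integrable lebesgue S f"
    unfolding set_integrable_def eq using integrable_complex_of_vec2_iff[OF m] .
  show "(LINT y:complex_of_vec2 -` S|lebesgue. f (complex_of_vec2 y)) = (LINT x:S|lebesgue. f x)"
    unfolding set_lebesgue_integral_def eq using integral_complex_of_vec2[OF m] .
qed

definition plane_jacobian :: "(complex \<Rightarrow> complex) \<Rightarrow> real" where
  "plane_jacobian L = Re (L 1) * Im (L \<i>) - Im (L 1) * Re (L \<i>)"

lemma det_matrix_vec2_conjugate:
  "det (matrix (vec2_of_complex \<circ> L \<circ> complex_of_vec2)) = plane_jacobian L"
proof -
  have "Complex 1 0 = 1" "Complex 0 1 = \<i>" by (simp_all add: complex_eq_iff)
  then show ?thesis
    by (simp add: det_2 matrix_def plane_jacobian_def vec2_of_complex_def complex_of_vec2_def axis_def)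
qed

lemma image_vec2_conjugate:
  "(vec2_of_complex \<circ> g \<circ> complex_of_vec2) ` (complex_of_vec2 -` S) = complex_of_vec2 -` (g ` S)"
  (is "?L = ?R")
proof
  show "?L \<subseteq> ?R" by auto
  show "?R \<subseteq> ?L"
  proof
    fix y assume "y \<in> ?R"
    then obtain s where "s \<in> S" "g s = complex_of_vec2 y" by auto
    then show "y \<in> ?L" by (intro image_eqI[of _ _ "vec2_of_complex s"]) auto
  qed
qed

theorem set_integral_change_of_variables_complex:
  fixes g :: "complex \<Rightarrow> complex" and H :: "complex \<Rightarrow> real"
  assumes S: "open S" and gS: "open (g ` S)"
    and der: "\<And>x. x \<in> S \<Longrightarrow> (g has_derivative g' x) (at x)"
    and inj: "inj_on g S"
    and cont: "continuous_on S (\<lambda>x. \<bar>plane_jacobian (g' x)\<bar> * H (g x))"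
    and cont_H: "continuous_on (g ` S) H"
    and int: "set_integrable lebesgue S (\<lambda>x. \<bar>plane_jacobian (g' x)\<bar> * H (g x))"
  shows "set_integrable lebesgue (g ` S) H"
    and "(LINT z:g ` S|lebesgue. H z) = (LINT x:S|lebesgue. \<bar>plane_jacobian (g' x)\<bar> * H (g x))"
proof -
  let ?T = complex_of_vec2 and ?T' = vec2_of_complex
  define S2 where "S2 = ?T -` S"
  define G where "G = ?T' \<circ> g \<circ> ?T"
  define G' where "G' = (\<lambda>x. ?T' \<circ> g' (?T x) \<circ> ?T)"
  define b where "b = (vec (LINT x:S|lebesgue. \<bar>plane_jacobian (g' x)\<bar> * H (g x)) :: real^1)"
  have S2: "S2 \<in> sets lebesgue"
    using measurable_sets[OF measurable_complex_of_vec2, of S] S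
    unfolding S2_def by (intro sets_completionI_sets) simp_all
  have G': "(G has_derivative G' x) (at x within S2)" if "x \<in> S2" for x
  proof -
    have "(?T' \<circ> g has_derivative ?T' \<circ> g' (?T x)) (at (?T x))"
      using that der[of "?T x"] bounded_linear_imp_has_derivative[OF bounded_linear_vec2_of_complex]
      unfolding S2_def by (auto intro: diff_chain_at)
    from diff_chain_at[OF bounded_linear_imp_has_derivative[OF bounded_linear_complex_of_vec2] this]
    show ?thesis unfolding G_def G'_def by (auto simp: o_def intro: has_derivative_at_withinI)
  qed
  have inj_G: "inj_on G S2"
    using inj unfolding G_def S2_def inj_on_def
    by (metis complex_of_vec2_inverse vec2_of_complex_inverse comp_apply vimageE)
  note cov = has_absolute_integral_change_of_variables[OF S2 G' inj_G, of "\<lambda>y. vec (H (?T y))" b]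
  have GS2: "G ` S2 = ?T -` (g ` S)"
    unfolding G_def S2_def by (rule image_vec2_conjugate)
  have int2: "(\<lambda>y. \<bar>plane_jacobian (g' (?T y))\<bar> * H (g (?T y))) absolutely_integrable_on S2"
    unfolding S2_def using set_integrable_complex_of_vec2_iff[OF S cont] int by simp
  have "(\<lambda>y. vec (H (?T y)) :: real^1) absolutely_integrable_on G ` S2 \<and>
      integral (G ` S2) (\<lambda>y. vec (H (?T y))) = b"
    using cov int2 set_integral_complex_of_vec2[OF S cont]
    by (simp add: absolutely_integrable_on_1_iff integral_on_1_eq G'_def G_def det_matrix_vec2_conjugate
        b_def set_lebesgue_integral_eq_integral(2) S2_def)
  then have abs_int: "(\<lambda>y. H (?T y)) absolutely_integrable_on ?T -` (g ` S)"
    and integral: "integral (?T -` (g ` S)) (\<lambda>y. H (?T y))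
                   = (LINT x:S|lebesgue. \<bar>plane_jacobian (g' x)\<bar> * H (g x))"
    using GS2 by (simp_all add: absolutely_integrable_on_1_iff integral_on_1_eq b_def vec_eq_iff)
  show "set_integrable lebesgue (g ` S) H"
    using abs_int set_integrable_complex_of_vec2_iff[OF gS cont_H] by simp
  show "(LINT z:g ` S|lebesgue. H z) = (LINT x:S|lebesgue. \<bar>plane_jacobian (g' x)\<bar> * H (g x))"
    using integral set_integral_complex_of_vec2[OF gS cont_H]
      set_lebesgue_integral_eq_integral(2)[OF abs_int] by simp
qed

section \<open>Integration by parts against compactly supported functions\<close>

lemma
  fixes f :: "complex \<Rightarrow> real"
  assumes [measurable]: "f \<in> borel_measurable borel"
  shows lborel_integral_translate_complex: "integral\<^sup>L lborel (\<lambda>z. f (z + c)) = integral\<^sup>L lborel f"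
    and lborel_integrable_translate_complex_iff:
      "integrable lborel (\<lambda>z. f (z + c)) \<longleftrightarrow> integrable lborel f"
proof -
  have "distr lborel borel (\<lambda>z. c + z) = (lborel :: complex measure)"
    using lborel_affine[of 1 c] by (simp add: density_1)
  then show "integral\<^sup>L lborel (\<lambda>z. f (z + c)) = integral\<^sup>L lborel f"
    and "integrable lborel (\<lambda>z. f (z + c)) \<longleftrightarrow> integrable lborel f"
    using integral_distr[of "\<lambda>z. c + z" lborel borel f]
      integrable_distr_eq[of "\<lambda>z. c + z" lborel borel f]
    by (simp_all add: add.commute)
qed

lemma
  fixes F :: "'a::real_normed_vector \<Rightarrow> 'b::real_normed_vector"
  assumes "closed K" "\<And>z. z \<notin> K \<Longrightarrow> F z = 0" "w \<notin> K"
  shows has_derivative_zero_outside_closed: "(F has_derivative (\<lambda>_. 0)) (at w)"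
    and frechet_derivative_zero_outside_closed: "frechet_derivative F (at w) = (\<lambda>_. 0)"
proof -
  show d: "(F has_derivative (\<lambda>_. 0)) (at w)"
    using has_derivative_transform_within_open[of "\<lambda>_. 0" "\<lambda>_. 0" w UNIV "-K" F] assms by auto
  then show "frechet_derivative F (at w) = (\<lambda>_. 0)" by (metis frechet_derivative_at)
qed

lemma continuous_compact_support_bounded:
  fixes f :: "'a::metric_space \<Rightarrow> real"
  assumes "continuous_on UNIV f" "compact K" "\<And>z. z \<notin> K \<Longrightarrow> f z = 0"
  obtains M where "\<And>z. \<bar>f z\<bar> \<le> M"
proof -
  have "bounded (f ` K)"
    using assms by (intro compact_imp_bounded compact_continuous_image) (auto intro: continuous_on_subset)
  then obtain B where "\<And>z. z \<in> K \<Longrightarrow> \<bar>f z\<bar> \<le> B" by (auto simp: bounded_iff)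
  then have "\<bar>f z\<bar> \<le> max B 0" for z
    using assms(3)[of z] by (cases "z \<in> K") (auto simp: le_max_iff_disj)
  then show ?thesis by (rule that)
qed

lemma integrable_lborel_compact_support:
  fixes f :: "'a::euclidean_space \<Rightarrow> real"
  assumes "continuous_on UNIV f" "compact K" "\<And>z. z \<notin> K \<Longrightarrow> f z = 0"
  shows "integrable lborel f"
proof -
  have "integrable lborel (\<lambda>x. indicator K x *\<^sub>R f x)"
    using assms by (intro borel_integrable_compact) (auto intro: continuous_on_subset)
  moreover have "(\<lambda>x. indicator K x *\<^sub>R f x) = f" using assms(3) by (auto simp: indicator_def fun_eq_iff)
  ultimately show ?thesis by simp
qed

lemma has_real_derivative_along_line:
  fixes F :: "complex \<Rightarrow> real"
  assumes "F differentiable (at (z + t *\<^sub>R v))"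
  shows "((\<lambda>t. F (z + t *\<^sub>R v)) has_real_derivative frechet_derivative F (at (z + t *\<^sub>R v)) v) (at t)"
proof -
  have F': "(F has_derivative frechet_derivative F (at (z + t *\<^sub>R v))) (at (z + t *\<^sub>R v))"
    using assms frechet_derivative_works by blast
  have "((\<lambda>t. z + t *\<^sub>R v) has_derivative (\<lambda>s. s *\<^sub>R v)) (at t)"
    by (auto intro!: derivative_eq_intros)
  from diff_chain_at[OF this F'] have
    "((\<lambda>t. F (z + t *\<^sub>R v)) has_derivative
      (\<lambda>s. frechet_derivative F (at (z + t *\<^sub>R v)) (s *\<^sub>R v))) (at t)"
    by (simp add: o_def)
  moreover have "(\<lambda>s. frechet_derivative F (at (z + t *\<^sub>R v)) (s *\<^sub>R v))
      = (\<lambda>s. frechet_derivative F (at (z + t *\<^sub>R v)) v * s)"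
    using linear_scale[OF has_derivative_linear[OF F']] by (simp add: mult.commute)
  ultimately show ?thesis by (simp add: has_field_derivative_def)
qed

lemma difference_quotient_tendsto_directional_derivative:
  fixes F :: "complex \<Rightarrow> real" and h :: "nat \<Rightarrow> real"
  assumes "F differentiable (at z)" "h \<longlonglongrightarrow> 0" "\<And>n. h n \<noteq> 0"
  shows "(\<lambda>n. (F (z + h n *\<^sub>R v) - F z) / h n) \<longlonglongrightarrow> frechet_derivative F (at z) v"
proof -
  have "((\<lambda>t. (F (z + t *\<^sub>R v) - F z) / t) \<longlongrightarrow> frechet_derivative F (at z) v) (at 0)"
    using has_real_derivative_along_line[of F z 0 v] assms(1) by (simp add: has_field_derivative_iff)
  from this[unfolded tendsto_at_iff_sequentially, rule_format, of h] show ?thesis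
    using assms(2,3) by (simp add: o_def)
qed

lemma difference_quotient_bounded:
  fixes F :: "complex \<Rightarrow> real"
  assumes "\<And>z. F differentiable (at z)" "\<And>w. \<bar>frechet_derivative F (at w) v\<bar> \<le> M" "h > 0"
  shows "\<bar>(F (z + h *\<^sub>R v) - F z) / h\<bar> \<le> M"
proof -
  obtain \<xi> where "F (z + h *\<^sub>R v) - F (z + 0 *\<^sub>R v) = (h - 0) * frechet_derivative F (at (z + \<xi> *\<^sub>R v)) v"
    using MVT2[of 0 h "\<lambda>t. F (z + t *\<^sub>R v)" "\<lambda>t. frechet_derivative F (at (z + t *\<^sub>R v)) v"]
      has_real_derivative_along_line assms(1,3) by blast
  then show ?thesis using assms(2,3) by simp
qed

text \<open>Proof by dominated convergence: the difference quotients have integral 0 by translation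
invariance of Lebesgue measure.\<close>

lemma lborel_integral_directional_derivative_eq_0:
  fixes F :: "complex \<Rightarrow> real"
  assumes dF: "\<And>z. F differentiable (at z)"
    and cont: "continuous_on UNIV (\<lambda>z. frechet_derivative F (at z) v)"
    and K: "compact K" and zero: "\<And>z. z \<notin> K \<Longrightarrow> F z = 0"
  shows "integral\<^sup>L lborel (\<lambda>z. frechet_derivative F (at z) v) = 0"
proof -
  define DF where "DF = (\<lambda>z. frechet_derivative F (at z) v)"
  have contF: "continuous_on UNIV F"
    using dF by (simp add: differentiable_imp_continuous_within continuous_at_imp_continuous_on)
  have [measurable]: "F \<in> borel_measurable borel" "DF \<in> borel_measurable borel"
    using contF cont unfolding DF_def by (auto intro: borel_measurable_continuous_onI)
  have DF0: "DF w = 0" if "w \<notin> K" for w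
    using frechet_derivative_zero_outside_closed[OF compact_imp_closed[OF K] zero that] by (simp add: DF_def)
  obtain M where M: "\<And>w. \<bar>DF w\<bar> \<le> M"
    using continuous_compact_support_bounded[OF cont[folded DF_def] K DF0] by blast
  define K1 where "K1 = {x + y |x y. x \<in> K \<and> y \<in> cball 0 (norm v)}"
  define h where "h = (\<lambda>n::nat. inverse (real (Suc n)))"
  have h: "0 < h n" "h n \<le> 1" for n by (auto simp: h_def field_simps)
  define s where "s = (\<lambda>n z. (F (z + h n *\<^sub>R v) - F z) / h n)"
  have intF: "integrable lborel F" by (rule integrable_lborel_compact_support[OF contF K zero])
  have int_s: "integral\<^sup>L lborel (s n) = 0" for n
    using lborel_integral_translate_complex[of F "h n *\<^sub>R v"] intF
      lborel_integrable_translate_complex_iff[of F "h n *\<^sub>R v"]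
    unfolding s_def by simp
  have s_bound: "norm (s n z) \<le> indicator K1 z *\<^sub>R M" for n z
  proof (cases "z \<in> K1")
    case True
    then show ?thesis using difference_quotient_bounded[OF dF, of v M "h n" z] M h[of n]
      by (simp add: s_def DF_def)
  next
    case False
    have "z \<notin> K" using False unfolding K1_def by (force intro: exI[of _ z] exI[of _ 0])
    moreover have "z + h n *\<^sub>R v \<notin> K"
    proof
      assume "z + h n *\<^sub>R v \<in> K"
      moreover have "norm (- (h n *\<^sub>R v)) \<le> norm v"
        using h[of n] by (simp add: mult_left_le_one_le)
      ultimately have "z \<in> K1" unfolding K1_def
        by (intro CollectI exI[of _ "z + h n *\<^sub>R v"] exI[of _ "- (h n *\<^sub>R v)"]) auto
      with False show False by simp
    qed
    ultimately show ?thesis using zero False by (simp add: s_def)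
  qed
  have "(\<lambda>n. integral\<^sup>L lborel (s n)) \<longlonglongrightarrow> integral\<^sup>L lborel DF"
  proof (rule integral_dominated_convergence[where w="\<lambda>z. indicator K1 z *\<^sub>R M"])
    show "integrable lborel (\<lambda>z. indicator K1 z *\<^sub>R M)"
      unfolding K1_def by (intro borel_integrable_compact compact_sums K compact_cball) auto
    show "AE z in lborel. (\<lambda>n. s n z) \<longlonglongrightarrow> DF z"
      using difference_quotient_tendsto_directional_derivative[OF dF LIMSEQ_inverse_real_of_nat]
      by (simp add: s_def DF_def h_def)
    show "s n \<in> borel_measurable lborel" for n unfolding s_def by measurable
    show "AE z in lborel. norm (s n z) \<le> indicator K1 z *\<^sub>R M" for n using s_bound by simp
  qed simp
  then have "(\<lambda>n. 0) \<longlonglongrightarrow> integral\<^sup>L lborel DF" by (simp add: int_s)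
  then show ?thesis unfolding DF_def by (simp add: LIMSEQ_const_iff)
qed

lemma product_with_compact_support_derivative:
  fixes u \<psi> :: "complex \<Rightarrow> real"
  assumes du: "\<And>z. z \<in> S \<Longrightarrow> u differentiable (at z)"
    and d\<psi>: "\<And>z. \<psi> differentiable (at z)"
    and K: "closed K" "K \<subseteq> S" "\<And>z. z \<notin> K \<Longrightarrow> \<psi> z = 0"
  shows "(\<lambda>z. u z * \<psi> z) differentiable (at z)"
    and "frechet_derivative (\<lambda>z. u z * \<psi> z) (at z) v =
      (if z \<in> S then u z * frechet_derivative \<psi> (at z) v + frechet_derivative u (at z) v * \<psi> z
       else 0)"
proof -
  let ?D = "if z \<in> S then u z * frechet_derivative \<psi> (at z) v + frechet_derivative u (at z) v * \<psi> z
            else 0"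
  obtain D where d: "((\<lambda>z. u z * \<psi> z) has_derivative D) (at z)" and "D v = ?D"
  proof (cases "z \<in> S")
    case True
    have "((\<lambda>z. u z * \<psi> z) has_derivative
        (\<lambda>h. u z * frechet_derivative \<psi> (at z) h + frechet_derivative u (at z) h * \<psi> z)) (at z)"
      using has_derivative_mult[of u _ z UNIV \<psi>] du[OF True] d\<psi>[of z]
      by (simp add: frechet_derivative_works)
    then show ?thesis using True that by simp
  next
    case False
    then have "z \<notin> K" using K(2) by auto
    then have "((\<lambda>z. u z * \<psi> z) has_derivative (\<lambda>_. 0)) (at z)"
      using has_derivative_zero_outside_closed[OF K(1), of "\<lambda>z. u z * \<psi> z"] K(3) by simp
    then show ?thesis using that False by simp
  qed
  then show "(\<lambda>z. u z * \<psi> z) differentiable (at z)" "frechet_derivative (\<lambda>z. u z * \<psi> z) (at z) v = ?D"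
    by (auto simp: differentiable_def frechet_derivative_at[OF d, symmetric])
qed

lemma set_integral_by_parts_compact_support:
  fixes u \<psi> :: "complex \<Rightarrow> real"
  assumes S: "open S"
    and du: "\<And>z. z \<in> S \<Longrightarrow> u differentiable (at z)"
    and cu: "continuous_on S (\<lambda>z. frechet_derivative u (at z) v)"
    and d\<psi>: "\<And>z. \<psi> differentiable (at z)"
    and c\<psi>: "continuous_on UNIV (\<lambda>z. frechet_derivative \<psi> (at z) v)"
    and K: "compact K" "K \<subseteq> S" "\<And>z. z \<notin> K \<Longrightarrow> \<psi> z = 0"
  shows "set_integrable lebesgue S (\<lambda>z. u z * frechet_derivative \<psi> (at z) v)"
    and "set_integrable lebesgue S (\<lambda>z. frechet_derivative u (at z) v * \<psi> z)"
    and "(LINT z:S|lebesgue. u z * frechet_derivative \<psi> (at z) v) =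
       - (LINT z:S|lebesgue. frechet_derivative u (at z) v * \<psi> z)"
proof -
  define a where "a = (\<lambda>z. u z * frechet_derivative \<psi> (at z) v)"
  define b where "b = (\<lambda>z. frechet_derivative u (at z) v * \<psi> z)"
  have Kc: "closed K" using K(1) compact_imp_closed by blast
  have D\<psi>0: "frechet_derivative \<psi> (at z) v = 0" if "z \<notin> K" for z
    using frechet_derivative_zero_outside_closed[OF Kc K(3) that] by simp
  have "continuous_on S u" "continuous_on S \<psi>"
    using du d\<psi> by (auto intro!: continuous_at_imp_continuous_on differentiable_imp_continuous_within)
  then have cont_a: "continuous_on S a" and cont_b: "continuous_on S b"
    using cu c\<psi> unfolding a_def b_def by (auto intro!: continuous_intros intro: continuous_on_subset)
  note product = product_with_compact_support_derivative[OF du d\<psi> Kc K(2,3)]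
  have "continuous_on (S \<union> -K) (\<lambda>z. frechet_derivative (\<lambda>z. u z * \<psi> z) (at z) v)"
  proof (intro continuous_on_open_Un)
    show "continuous_on S (\<lambda>z. frechet_derivative (\<lambda>z. u z * \<psi> z) (at z) v)"
      using continuous_on_add[OF cont_a cont_b] by (rule continuous_on_eq) (simp add: product a_def b_def)
    show "continuous_on (-K) (\<lambda>z. frechet_derivative (\<lambda>z. u z * \<psi> z) (at z) v)"
      using K(3) D\<psi>0 by (intro continuous_on_eq[OF continuous_on_const[of _ 0]]) (auto simp: product)
  qed (use S Kc in auto)
  moreover have "S \<union> -K = UNIV" using K(2) by auto
  ultimately have "integral\<^sup>L lborel (\<lambda>z. frechet_derivative (\<lambda>z. u z * \<psi> z) (at z) v) = 0"
    using lborel_integral_directional_derivative_eq_0[OF product(1) _ K(1)] K(3) by simp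
  moreover have "(\<lambda>z. frechet_derivative (\<lambda>z. u z * \<psi> z) (at z) v)
      = (\<lambda>z. indicator K z *\<^sub>R a z + indicator K z *\<^sub>R b z)"
    using K D\<psi>0 by (auto simp: product a_def b_def fun_eq_iff indicator_def)
  moreover have int_Ka: "integrable lborel (\<lambda>z. indicator K z *\<^sub>R a z)"
    using K cont_a by (intro borel_integrable_compact) (auto intro: continuous_on_subset)
  moreover have int_Kb: "integrable lborel (\<lambda>z. indicator K z *\<^sub>R b z)"
    using K cont_b by (intro borel_integrable_compact) (auto intro: continuous_on_subset)
  ultimately have sum0: "integral\<^sup>L lborel (\<lambda>z. indicator K z *\<^sub>R a z)
      + integral\<^sup>L lborel (\<lambda>z. indicator K z *\<^sub>R b z) = 0"
    by simp
  have "(\<lambda>z. indicator S z *\<^sub>R a z) = (\<lambda>z. indicator K z *\<^sub>R a z)"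
    "(\<lambda>z. indicator S z *\<^sub>R b z) = (\<lambda>z. indicator K z *\<^sub>R b z)"
    using K D\<psi>0 by (auto simp: a_def b_def fun_eq_iff indicator_def)
  moreover have "integrable lebesgue f" "integral\<^sup>L lebesgue f = integral\<^sup>L lborel f"
    if "integrable lborel f" for f :: "complex \<Rightarrow> real"
    using that integrable_completion integral_completion borel_measurable_integrable by blast+
  ultimately show "set_integrable lebesgue S a" "set_integrable lebesgue S b"
    "(LINT z:S|lebesgue. a z) = - (LINT z:S|lebesgue. b z)"
    using int_Ka int_Kb sum0 unfolding set_integrable_def set_lebesgue_integral_def by simp_all
qed

section \<open>Smooth bump functions\<close>

fun Ck_univariate :: "nat \<Rightarrow> (real \<Rightarrow> real) \<Rightarrow> bool" where
  "Ck_univariate 0 f = continuous_on UNIV f"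
| "Ck_univariate (Suc k) f = (\<exists>f'. (\<forall>x. (f has_real_derivative f' x) (at x)) \<and> Ck_univariate k f')"

lemma Ck_univariate_continuous: "Ck_univariate k f \<Longrightarrow> continuous_on UNIV f"
proof (cases k)
  case (Suc n)
  assume "Ck_univariate k f"
  then obtain f' where "\<forall>x. (f has_real_derivative f' x) (at x)" using Suc by auto
  then have "\<And>x. isCont f x" using DERIV_isCont by blast
  then show ?thesis by (simp add: continuous_at_imp_continuous_on)
qed simp

lemma Ck_univariate_Suc_imp: "Ck_univariate (Suc k) f \<Longrightarrow> Ck_univariate k f"
proof (induction k arbitrary: f)
  case 0 then show ?case using Ck_univariate_continuous[OF "0"] by simp
next
  case (Suc k)
  then obtain f' where "\<forall>x. (f has_real_derivative f' x) (at x)" "Ck_univariate (Suc k) f'" by auto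
  then show ?case using Suc.IH by auto
qed

lemma Ck_univariate_const: "Ck_univariate k (\<lambda>_. c)"
proof (induction k arbitrary: c)
  case (Suc k) then show ?case by (auto intro!: exI[of _ "\<lambda>_. 0"])
qed simp

lemma Ck_univariate_add:
  "Ck_univariate k f \<Longrightarrow> Ck_univariate k g \<Longrightarrow> Ck_univariate k (\<lambda>x. f x + g x)"
proof (induction k arbitrary: f g)
  case 0 then show ?case by (auto intro: continuous_on_add)
next
  case (Suc k)
  from Suc.prems obtain f' g' where "\<forall>x. (f has_real_derivative f' x) (at x)" "Ck_univariate k f'"
     "\<forall>x. (g has_real_derivative g' x) (at x)" "Ck_univariate k g'" by auto
  then show ?case using Suc.IH by (auto intro!: exI[of _ "\<lambda>x. f' x + g' x"] derivative_intros)
qed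

lemma Ck_univariate_mult:
  "Ck_univariate k f \<Longrightarrow> Ck_univariate k g \<Longrightarrow> Ck_univariate k (\<lambda>x. f x * g x)"
proof (induction k arbitrary: f g)
  case 0 then show ?case by (auto intro: continuous_on_mult)
next
  case (Suc k)
  from Suc.prems obtain f' g' where d: "\<forall>x. (f has_real_derivative f' x) (at x)" "Ck_univariate k f'"
     "\<forall>x. (g has_real_derivative g' x) (at x)" "Ck_univariate k g'" by auto
  have "Ck_univariate k f" "Ck_univariate k g" using Suc.prems Ck_univariate_Suc_imp by auto
  then have "Ck_univariate k (\<lambda>x. f' x * g x + f x * g' x)" using d Suc.IH Ck_univariate_add by auto
  moreover have "((\<lambda>x. f x * g x) has_real_derivative f' x * g x + f x * g' x) (at x)" for x
    using d by (auto intro!: derivative_eq_intros)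
  ultimately show ?case by (auto intro!: exI[of _ "\<lambda>x. f' x * g x + f x * g' x"])
qed

lemma Ck_univariate_affine: "Ck_univariate k f \<Longrightarrow> Ck_univariate k (\<lambda>x. f (c * x + d))"
proof (induction k arbitrary: f)
  case 0 then show ?case by (auto intro!: continuous_on_compose2[of UNIV f] continuous_intros)
next
  case (Suc k)
  from Suc.prems obtain f' where d: "\<forall>x. (f has_real_derivative f' x) (at x)" "Ck_univariate k f'"
    by auto
  have "Ck_univariate k (\<lambda>x. c * f' (c * x + d))"
    using Suc.IH[OF d(2)] Ck_univariate_mult Ck_univariate_const by auto
  moreover have "((\<lambda>x. f (c * x + d)) has_real_derivative c * f' (c * x + d)) (at x)" for x
  proof -
    have "((\<lambda>x. c * x + d) has_real_derivative c) (at x)" by (auto intro!: derivative_eq_intros)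
    from DERIV_chain2[OF d(1)[rule_format] this] show ?thesis by (simp add: mult.commute)
  qed
  ultimately show ?case by (auto intro!: exI[of _ "\<lambda>x. c * f' (c * x + d)"])
qed

lemma poly_times_exp_neg_tendsto_0: "((\<lambda>y. poly P y * exp (- y)) \<longlongrightarrow> (0::real)) at_top"
proof -
  have "((\<lambda>y. \<Sum>i\<le>degree P. coeff P i * (y ^ i / exp y)) \<longlongrightarrow> (\<Sum>i\<le>degree P. coeff P i * 0))
      at_top"
    by (intro tendsto_sum tendsto_mult tendsto_const tendsto_power_div_exp_0)
  moreover have "(\<lambda>y. \<Sum>i\<le>degree P. coeff P i * (y ^ i / exp y)) = (\<lambda>y. poly P y * exp (- y))"
    by (auto simp: poly_altdef sum_divide_distrib exp_minus field_simps)
  ultimately show ?thesis by simp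
qed

text \<open>All derivatives of exp(-1/x) have the shape P(1/x) exp(-1/x) on x > 0, which turns the
smoothness of the bump at 0 into an induction over P.\<close>

definition exp_bump_poly :: "real poly \<Rightarrow> real \<Rightarrow> real" where
  "exp_bump_poly P x = (if x > 0 then poly P (1 / x) * exp (- (1 / x)) else 0)"

definition exp_bump_poly_deriv :: "real poly \<Rightarrow> real poly" where
  "exp_bump_poly_deriv P = [:0, 0, 1:] * (P - pderiv P)"

lemma has_real_derivative_exp_bump_poly:
  "(exp_bump_poly P has_real_derivative exp_bump_poly (exp_bump_poly_deriv P) x) (at x)"
proof -
  consider "x > 0" | "x < 0" | "x = 0" by linarith
  then show ?thesis
  proof cases
    case 1
    have d: "((\<lambda>x. poly P (1 / x) * exp (- (1 / x))) has_real_derivative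
        exp_bump_poly (exp_bump_poly_deriv P) x) (at x)"
    proof -
      have "((\<lambda>x. poly P (1 / x) * exp (- (1 / x))) has_real_derivative
          poly (pderiv P) (1 / x) * (- 1 / x^2) * exp (- (1 / x)) +
          poly P (1 / x) * (exp (- (1 / x)) * (1 / x^2))) (at x)"
        using 1 by (auto intro!: derivative_eq_intros DERIV_chain2[OF poly_DERIV] simp: power2_eq_square)
      moreover have "poly (pderiv P) (1 / x) * (- 1 / x^2) * exp (- (1 / x)) +
          poly P (1 / x) * (exp (- (1 / x)) * (1 / x^2)) = exp_bump_poly (exp_bump_poly_deriv P) x"
        using 1 by (simp add: exp_bump_poly_def exp_bump_poly_deriv_def algebra_simps power2_eq_square)
      ultimately show ?thesis by simp
    qed
    show ?thesis
      by (rule has_field_derivative_transform_within_open[OF d, of "{0<..}"])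
        (use 1 in \<open>auto simp: exp_bump_poly_def\<close>)
  next
    case 2
    have d: "((\<lambda>x. 0) has_real_derivative exp_bump_poly (exp_bump_poly_deriv P) x) (at x)"
      using 2 by (simp add: exp_bump_poly_def)
    show ?thesis
      by (rule has_field_derivative_transform_within_open[OF d, of "{..<0}"])
        (use 2 in \<open>auto simp: exp_bump_poly_def\<close>)
  next
    case 3
    have "((\<lambda>h. (exp_bump_poly P (0 + h) - exp_bump_poly P 0) / h) \<longlongrightarrow> 0) (at 0)"
    proof (rule filterlim_split_at)
      show "((\<lambda>h. (exp_bump_poly P (0 + h) - exp_bump_poly P 0) / h) \<longlongrightarrow> 0) (at_left 0)"
        by (rule tendsto_eventually)
          (auto simp: exp_bump_poly_def eventually_at_left_field intro: exI[of _ "-1"])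
      have "((\<lambda>y. poly (pCons 0 P) y * exp (- y)) \<longlongrightarrow> (0::real)) at_top"
        by (rule poly_times_exp_neg_tendsto_0)
      then have "((\<lambda>h. poly (pCons 0 P) (inverse h) * exp (- inverse h)) \<longlongrightarrow> (0::real)) (at_right 0)"
        by (simp add: filterlim_at_top_to_right)
      then show "((\<lambda>h. (exp_bump_poly P (0 + h) - exp_bump_poly P 0) / h) \<longlongrightarrow> 0) (at_right 0)"
        by (rule Lim_transform_eventually)
          (auto simp: exp_bump_poly_def eventually_at_right_field divide_inverse intro!: exI[of _ 1])
    qed
    then have "(exp_bump_poly P has_real_derivative 0) (at 0)" by (simp add: has_field_derivative_iff)
    then show ?thesis using 3 by (simp add: exp_bump_poly_def)
  qed
qed

lemma Ck_univariate_exp_bump_poly: "Ck_univariate k (exp_bump_poly P)"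
proof (induction k arbitrary: P)
  case 0
  have "\<And>x. isCont (exp_bump_poly P) x"
    using has_real_derivative_exp_bump_poly DERIV_isCont by blast
  then show ?case by (simp add: continuous_at_imp_continuous_on)
next
  case (Suc k) then show ?case using has_real_derivative_exp_bump_poly by auto
qed

definition exp_bump :: "real \<Rightarrow> real" where
  "exp_bump x = (if x > 0 then exp (- (1 / x)) else 0)"

lemma Ck_univariate_exp_bump: "Ck_univariate k exp_bump"
proof -
  have "exp_bump = exp_bump_poly 1" by (auto simp: exp_bump_def exp_bump_poly_def fun_eq_iff)
  then show ?thesis using Ck_univariate_exp_bump_poly by metis
qed

lemma exp_bump_range: "0 \<le> exp_bump x" "exp_bump x \<le> 1"
  by (auto simp: exp_bump_def)

lemma exp_bump_nonzero_iff: "exp_bump x \<noteq> 0 \<longleftrightarrow> x > 0"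
  by (auto simp: exp_bump_def)

lemma has_derivative_comp_Re:
  assumes "(f has_real_derivative f') (at (Re z))"
  shows "((\<lambda>z. f (Re z)) has_derivative (\<lambda>h. f' * Re h)) (at z)"
proof -
  have "(Re has_derivative Re) (at z)" by (rule bounded_linear_imp_has_derivative[OF bounded_linear_Re])
  from has_derivative_compose[OF this assms[unfolded has_field_derivative_def]] show ?thesis .
qed

lemma has_derivative_comp_Im:
  assumes "(f has_real_derivative f') (at (Im z))"
  shows "((\<lambda>z. f (Im z)) has_derivative (\<lambda>h. f' * Im h)) (at z)"
proof -
  have "(Im has_derivative Im) (at z)" by (rule bounded_linear_imp_has_derivative[OF bounded_linear_Im])
  from has_derivative_compose[OF this assms[unfolded has_field_derivative_def]] show ?thesis .
qed

lemma continuous_on_tensor_product: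
  fixes f g :: "real \<Rightarrow> real"
  assumes "continuous_on UNIV f" "continuous_on UNIV g"
  shows "continuous_on UNIV (\<lambda>z. f (Re z) * g (Im z))"
proof -
  have "continuous_on UNIV (\<lambda>z. f (Re z))"
    by (rule continuous_on_compose2[OF assms(1) continuous_on_Re[OF continuous_on_id]]) auto
  moreover have "continuous_on UNIV (\<lambda>z. g (Im z))"
    by (rule continuous_on_compose2[OF assms(2) continuous_on_Im[OF continuous_on_id]]) auto
  ultimately show ?thesis by (rule continuous_on_mult')
qed

lemma Ck_real_tensor_product:
  "Ck_univariate n f \<Longrightarrow> Ck_univariate n g \<Longrightarrow> Ck_real n (\<lambda>z. f (Re z) * g (Im z))"
proof (induction n arbitrary: f g)
  case 0 then show ?case using continuous_on_tensor_product by simp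
next
  case (Suc n)
  from Suc.prems obtain f' g' where d: "\<forall>x. (f has_real_derivative f' x) (at x)" "Ck_univariate n f'"
     "\<forall>x. (g has_real_derivative g' x) (at x)" "Ck_univariate n g'" by auto
  have nf: "Ck_univariate n f" "Ck_univariate n g" using Suc.prems Ck_univariate_Suc_imp by auto
  have deriv: "((\<lambda>z. f (Re z) * g (Im z)) has_derivative
     (\<lambda>h. f (Re z) * (g' (Im z) * Im h) + f' (Re z) * Re h * g (Im z))) (at z)" for z
    using has_derivative_mult[OF has_derivative_comp_Re[OF d(1)[rule_format]]
        has_derivative_comp_Im[OF d(3)[rule_format]]]
    by simp
  have px: "pdx (\<lambda>z. f (Re z) * g (Im z)) = (\<lambda>z. f' (Re z) * g (Im z))"
    unfolding pdx_def fun_eq_iff by (simp add: frechet_derivative_at[OF deriv, symmetric])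
  have py: "pdy (\<lambda>z. f (Re z) * g (Im z)) = (\<lambda>z. f (Re z) * g' (Im z))"
    unfolding pdy_def fun_eq_iff by (simp add: frechet_derivative_at[OF deriv, symmetric])
  have "(\<lambda>z. f (Re z) * g (Im z)) differentiable (at z)" for z using deriv differentiable_def by blast
  moreover have "continuous_on UNIV (\<lambda>z. f (Re z) * g (Im z))"
    using continuous_on_tensor_product Ck_univariate_continuous Suc.prems by blast
  ultimately show ?case using Suc.IH[OF d(2) nf(2)] Suc.IH[OF nf(1) d(4)] px py by simp
qed

lemma smooth_real_tensor_product:
  "(\<And>n. Ck_univariate n f) \<Longrightarrow> (\<And>n. Ck_univariate n g) \<Longrightarrow> smooth_real (\<lambda>z. f (Re z) * g (Im z))"
  unfolding smooth_real_def using Ck_real_tensor_product by blast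

definition interval_bump :: "real \<Rightarrow> real \<Rightarrow> real \<Rightarrow> real \<Rightarrow> real" where
  "interval_bump \<alpha> \<beta> m x = exp_bump (m * (x - \<alpha>)) * exp_bump (m * (\<beta> - x))"

lemma Ck_univariate_interval_bump: "Ck_univariate k (interval_bump \<alpha> \<beta> m)"
proof -
  have "interval_bump \<alpha> \<beta> m = (\<lambda>x. exp_bump (m * x + - m * \<alpha>) * exp_bump (- m * x + m * \<beta>))"
    by (simp add: interval_bump_def fun_eq_iff algebra_simps)
  then show ?thesis
    by (simp only: Ck_univariate_mult Ck_univariate_affine[OF Ck_univariate_exp_bump])
qed

lemma interval_bump_nonzero_iff:
  "m > 0 \<Longrightarrow> interval_bump \<alpha> \<beta> m x \<noteq> 0 \<longleftrightarrow> \<alpha> < x \<and> x < \<beta>"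
  by (auto simp: interval_bump_def exp_bump_nonzero_iff algebra_simps)

lemma interval_bump_range: "0 \<le> interval_bump \<alpha> \<beta> m x" "interval_bump \<alpha> \<beta> m x \<le> 1"
  using exp_bump_range by (auto simp: interval_bump_def intro: mult_le_one)

lemma interval_bump_tendsto_indicator:
  "(\<lambda>n. interval_bump \<alpha> \<beta> (real (Suc n)) x) \<longlonglongrightarrow> (if \<alpha> < x \<and> x < \<beta> then 1 else 0)"
proof (cases "\<alpha> < x \<and> x < \<beta>")
  case True
  have scaled: "exp_bump (m * c) = exp (- ((1 / c) * inverse m))" if "m > 0" "c > 0" for m c :: real
    using that by (simp add: exp_bump_def field_simps)
  have lim: "(\<lambda>n. exp (- ((1 / c) * inverse (real (Suc n))))) \<longlonglongrightarrow> 1" for c :: real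
  proof -
    have "(\<lambda>n. exp (- ((1 / c) * inverse (real (Suc n))))) \<longlonglongrightarrow> exp (- ((1 / c) * 0))"
      by (intro tendsto_intros LIMSEQ_inverse_real_of_nat)
    then show ?thesis by simp
  qed
  have eq: "interval_bump \<alpha> \<beta> (real (Suc n)) x =
      exp (- ((1 / (x - \<alpha>)) * inverse (real (Suc n)))) *
      exp (- ((1 / (\<beta> - x)) * inverse (real (Suc n))))" for n
    using True by (simp add: interval_bump_def scaled)
  show ?thesis using True tendsto_mult[OF lim lim] unfolding eq by simp
next
  case False
  then have "interval_bump \<alpha> \<beta> (real (Suc n)) x = 0" for n
    using interval_bump_nonzero_iff[of "real (Suc n)"] by auto
  moreover have "(if \<alpha> < x \<and> x < \<beta> then 1 else 0) = (0::real)" using False by simp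
  ultimately show ?thesis by (simp only: tendsto_const)
qed

definition box_bump :: "complex \<Rightarrow> complex \<Rightarrow> real \<Rightarrow> complex \<Rightarrow> real" where
  "box_bump a b m z = interval_bump (Re a) (Re b) m (Re z) * interval_bump (Im a) (Im b) m (Im z)"

lemma smooth_real_box_bump: "smooth_real (box_bump a b m)"
  unfolding box_bump_def by (intro smooth_real_tensor_product Ck_univariate_interval_bump)

lemma box_bump_support: "m > 0 \<Longrightarrow> {z. box_bump a b m z \<noteq> 0} \<subseteq> box a b"
  by (auto simp: box_bump_def interval_bump_nonzero_iff in_box_complex_iff)

lemma test_fun_box_bump: "m > 0 \<Longrightarrow> cbox a b \<subseteq> D \<Longrightarrow> test_fun D (box_bump a b m)"
proof -
  assume m: "m > 0" and ab: "cbox a b \<subseteq> D"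
  have cl: "closure {z. box_bump a b m z \<noteq> 0} \<subseteq> cbox a b"
    by (rule closure_minimal[OF subset_trans[OF box_bump_support[OF m] box_subset_cbox] closed_cbox])
  have "compact (cbox a b \<inter> closure {z. box_bump a b m z \<noteq> 0})"
    by (intro compact_Int_closed compact_cbox closed_closure)
  moreover have "cbox a b \<inter> closure {z. box_bump a b m z \<noteq> 0} = closure {z. box_bump a b m z \<noteq> 0}"
    using cl by blast
  ultimately show ?thesis unfolding test_fun_def using ab smooth_real_box_bump cl by auto
qed

lemma box_bump_range: "0 \<le> box_bump a b m z" "box_bump a b m z \<le> 1"
  using interval_bump_range by (auto simp: box_bump_def intro: mult_le_one)

lemma box_bump_tendsto_indicator:
  "(\<lambda>n. box_bump a b (real (Suc n)) z) \<longlonglongrightarrow> indicator (box a b) z"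
proof -
  have "(\<lambda>n. box_bump a b (real (Suc n)) z) \<longlonglongrightarrow>
     (if Re a < Re z \<and> Re z < Re b then 1 else 0) * (if Im a < Im z \<and> Im z < Im b then 1 else 0)"
    unfolding box_bump_def by (intro tendsto_mult interval_bump_tendsto_indicator)
  moreover have "indicator (box a b) z =
      (if Re a < Re z \<and> Re z < Re b then 1 else 0) * (if Im a < Im z \<and> Im z < Im b then (1::real) else 0)"
    by (simp add: indicator_def in_box_complex_iff)
  ultimately show ?thesis by (simp only:)
qed

section \<open>The fundamental lemma of the calculus of variations\<close>

lemma sets_lebesgue_open: "open (S::'a::euclidean_space set) \<Longrightarrow> S \<in> sets lebesgue"
  by (simp add: sets_completionI_sets)

lemma set_borel_measurable_lebesgue_continuous_on_open:
  fixes f :: "'a::euclidean_space \<Rightarrow> real"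
  assumes "open S" "continuous_on S f"
  shows "set_borel_measurable lebesgue S f"
proof -
  have "(\<lambda>x. indicator S x *\<^sub>R f x) \<in> borel_measurable borel"
    using assms by (intro borel_measurable_continuous_on_indicator) auto
  then show ?thesis unfolding set_borel_measurable_def by (simp add: measurable_completion)
qed

lemma test_funD:
  assumes "test_fun D \<psi>"
  shows "\<psi> differentiable (at z)"
    and "continuous_on UNIV (\<lambda>z. frechet_derivative \<psi> (at z) 1)"
    and "continuous_on UNIV (\<lambda>z. frechet_derivative \<psi> (at z) \<i>)"
    and "continuous_on UNIV \<psi>"
    and "compact (closure {z. \<psi> z \<noteq> 0})" "closure {z. \<psi> z \<noteq> 0} \<subseteq> D"
    and "z \<notin> closure {z. \<psi> z \<noteq> 0} \<Longrightarrow> \<psi> z = 0"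
proof -
  have C2: "Ck_real (Suc (Suc 0)) \<psi>" using assms unfolding test_fun_def smooth_real_def by blast
  from C2 show "\<psi> differentiable (at z)" "continuous_on UNIV \<psi>" by simp_all
  from C2 show "continuous_on UNIV (\<lambda>z. frechet_derivative \<psi> (at z) 1)" by (simp add: pdx_def)
  from C2 show "continuous_on UNIV (\<lambda>z. frechet_derivative \<psi> (at z) \<i>)" by (simp add: pdy_def)
  show "compact (closure {z. \<psi> z \<noteq> 0})" "closure {z. \<psi> z \<noteq> 0} \<subseteq> D"
    using assms unfolding test_fun_def by simp_all
  show "z \<notin> closure {z. \<psi> z \<noteq> 0} \<Longrightarrow> \<psi> z = 0"
    using closure_subset[of "{z. \<psi> z \<noteq> 0}"] by blast
qed

lemma set_integrable_mult_test_fun: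
  fixes g :: "complex \<Rightarrow> real"
  assumes g: "set_integrable lebesgue D g" and \<psi>: "test_fun D \<psi>"
  shows "set_integrable lebesgue D (\<lambda>z. g z * \<psi> z)"
proof -
  define K where "K = closure {z. \<psi> z \<noteq> 0}"
  have K: "compact K" "\<And>z. z \<notin> K \<Longrightarrow> \<psi> z = 0"
    unfolding K_def by (fact test_funD(5)[OF \<psi>], fact test_funD(7)[OF \<psi>])
  obtain B where B: "\<And>z. \<bar>\<psi> z\<bar> \<le> B"
    using continuous_compact_support_bounded[OF test_funD(4)[OF \<psi>] K] by blast
  have bound: "\<bar>g z * \<psi> z\<bar> \<le> \<bar>B * g z\<bar>" for z
  proof -
    have "\<bar>g z\<bar> * \<bar>\<psi> z\<bar> \<le> \<bar>g z\<bar> * B" using B[of z] by (intro mult_left_mono) auto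
    then show ?thesis using B[of z] by (simp add: abs_mult mult.commute)
  qed
  have "\<psi> \<in> borel_measurable borel"
    using test_funD(4)[OF \<psi>] by (rule borel_measurable_continuous_onI)
  then have "\<psi> \<in> borel_measurable lebesgue" by (simp add: measurable_completion)
  moreover have "(\<lambda>x. indicator D x *\<^sub>R g x) \<in> borel_measurable lebesgue"
    using g unfolding set_integrable_def by (rule borel_measurable_integrable)
  ultimately have "(\<lambda>x. (indicator D x *\<^sub>R g x) * \<psi> x) \<in> borel_measurable lebesgue"
    by (simp add: borel_measurable_times)
  then have "set_borel_measurable lebesgue D (\<lambda>z. g z * \<psi> z)"
    unfolding set_borel_measurable_def by (simp add: mult.assoc)
  then show ?thesis
    by (rule set_integrable_bound[OF set_integrable_mult_right[OF g, of B]])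
      (simp add: AE_I2 bound)
qed

lemma box_bump_measurable: "box_bump a b m \<in> borel_measurable lebesgue"
proof -
  have "continuous_on UNIV (box_bump a b m)"
    using smooth_real_box_bump[of a b m] unfolding smooth_real_def by (metis Ck_real.simps(1))
  then have "box_bump a b m \<in> borel_measurable borel" by (rule borel_measurable_continuous_onI)
  then show ?thesis by (simp add: measurable_completion)
qed

text \<open>The box bumps converge pointwise to the indicator of the open box, so by dominated
convergence the integral of h over the box is a limit of integrals against test functions.\<close>

lemma integral_cbox_eq_0_if_orthogonal_to_test_funs:
  fixes h :: "complex \<Rightarrow> real"
  assumes ab: "cbox a b \<subseteq> D"
    and int: "set_integrable lebesgue (cbox a b) h"
    and zero: "\<And>\<psi>. test_fun D \<psi> \<Longrightarrow> (LINT z:D|lebesgue. h z * \<psi> z) = 0"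
  shows "integral (cbox a b) h = 0"
proof -
  define g where "g = (\<lambda>z. indicator (cbox a b) z *\<^sub>R h z)"
  have int_g: "integrable lebesgue g" using int by (simp add: set_integrable_def g_def)
  have g_meas: "g \<in> borel_measurable lebesgue" using int_g by (rule borel_measurable_integrable)
  define s where "s = (\<lambda>n z. g z * box_bump a b (real (Suc n)) z)"
  have "(LINT z:D|lebesgue. h z * box_bump a b m z) = integral\<^sup>L lebesgue (\<lambda>z. g z * box_bump a b m z)"
    if m: "m > 0" for m
  proof -
    have "indicator D z *\<^sub>R (h z * box_bump a b m z) = g z * box_bump a b m z" for z
    proof (cases "box_bump a b m z = 0")
      case False
      then have "z \<in> cbox a b" "z \<in> D" using box_bump_support[OF m] box_subset_cbox ab by blast+
      then show ?thesis by (simp add: g_def)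
    qed simp
    then show ?thesis unfolding set_lebesgue_integral_def by presburger
  qed
  then have int_s: "integral\<^sup>L lebesgue (s n) = 0" for n
    using zero[OF test_fun_box_bump[OF _ ab]] unfolding s_def by simp
  have "(\<lambda>n. integral\<^sup>L lebesgue (s n)) \<longlonglongrightarrow> integral\<^sup>L lebesgue (\<lambda>z. g z * indicator (box a b) z)"
  proof (rule integral_dominated_convergence[where w="\<lambda>z. norm (g z)"])
    show "(\<lambda>z. g z * indicator (box a b) z) \<in> borel_measurable lebesgue"
      by (intro borel_measurable_times g_meas borel_measurable_indicator)
        (auto intro: lmeasurable_box[THEN fmeasurableD])
    show "s n \<in> borel_measurable lebesgue" for n
      unfolding s_def using g_meas box_bump_measurable by (rule borel_measurable_times)
    show "AE z in lebesgue. (\<lambda>n. s n z) \<longlonglongrightarrow> g z * indicator (box a b) z"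
      unfolding s_def by (intro AE_I2 tendsto_mult tendsto_const box_bump_tendsto_indicator)
    show "AE z in lebesgue. norm (s n z) \<le> norm (g z)" for n
      using box_bump_range[of a b "real (Suc n)"] unfolding s_def
      by (intro AE_I2) (simp add: abs_mult mult_right_le_one_le)
  qed (use int_g in simp)
  then have "integral\<^sup>L lebesgue (\<lambda>z. g z * indicator (box a b) z) = 0"
    using int_s by (simp add: LIMSEQ_const_iff)
  moreover have "(\<lambda>z. g z * indicator (box a b) z) = (\<lambda>z. indicator (box a b) z *\<^sub>R h z)"
    using box_subset_cbox[of a b] by (auto simp: g_def indicator_def fun_eq_iff)
  moreover have "set_integrable lebesgue (box a b) h"
    by (rule set_integrable_subset[OF int]) (auto simp: box_subset_cbox)
  ultimately have "integral (box a b) h = 0"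
    using set_lebesgue_integral_eq_integral(2) unfolding set_lebesgue_integral_def by fastforce
  then show ?thesis by (simp add: integral_open_interval)
qed

lemma cbox_diagonal_subset_cbox:
  fixes x :: complex
  assumes "x \<in> box a b" "0 < \<delta>" "\<delta> < Re b - Re x" "\<delta> < Im b - Im x"
  shows "cbox x (x + \<delta> *\<^sub>R One) \<subseteq> cbox a b"
  using assms by (auto simp: in_cbox_complex_iff in_box_complex_iff Basis_complex_def)

text \<open>At a Lebesgue point x of h the averages of h over the squares cbox x (x + \<delta> One) tend to
h x, and these averages vanish by the previous lemma.\<close>

lemma ae_zero_on_cbox_if_orthogonal_to_test_funs:
  fixes h :: "complex \<Rightarrow> real"
  assumes ab: "cbox a b \<subseteq> D"
    and int: "\<And>c d. cbox c d \<subseteq> D \<Longrightarrow> set_integrable lebesgue (cbox c d) h"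
    and zero: "\<And>\<psi>. test_fun D \<psi> \<Longrightarrow> (LINT z:D|lebesgue. h z * \<psi> z) = 0"
  shows "\<exists>N. negligible N \<and> (\<forall>x\<in>cbox a b - N. h x = 0)"
proof -
  define f where "f = (\<lambda>z. indicator (cbox a b) z *\<^sub>R h z)"
  have "integrable lebesgue f" using int[OF ab] by (simp add: set_integrable_def f_def)
  then have "set_integrable lebesgue (cbox c d) f" for c d
    unfolding set_integrable_def by (rule integrable_mult_indicator[rotated]) simp
  then have "f integrable_on cbox c d" for c d by (rule set_lebesgue_integral_eq_integral(1))
  then obtain N where N: "negligible N"
    and lebesgue_point: "\<And>x e. \<lbrakk>x \<notin> N; 0 < e\<rbrakk> \<Longrightarrow> \<exists>d>0. \<forall>\<delta>. 0 < \<delta> \<and> \<delta> < d \<longrightarrow>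
        norm (integral (cbox x (x + \<delta> *\<^sub>R One)) f /\<^sub>R \<delta> ^ DIM(complex) - f x) < e"
    using integrable_ccontinuous_explicit[of f] by metis
  have "h x = 0" if x: "x \<in> box a b" "x \<notin> N" for x
  proof (rule ccontr)
    assume hx: "h x \<noteq> 0"
    then obtain d where d: "d > 0" and avg: "\<And>\<delta>. 0 < \<delta> \<and> \<delta> < d \<Longrightarrow>
        norm (integral (cbox x (x + \<delta> *\<^sub>R One)) f /\<^sub>R \<delta> ^ DIM(complex) - f x) < \<bar>h x\<bar>"
      using lebesgue_point[OF x(2), of "\<bar>h x\<bar>"] by auto
    define \<delta> where "\<delta> = min (d / 2) (min (Re b - Re x) (Im b - Im x) / 2)"
    have "Re x < Re b" "Im x < Im b" using x(1) by (auto simp: in_box_complex_iff)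
    then have \<delta>: "0 < \<delta>" "\<delta> < d" "\<delta> < Re b - Re x" "\<delta> < Im b - Im x"
      using d unfolding \<delta>_def min_def by auto
    note sub = cbox_diagonal_subset_cbox[OF x(1) \<delta>(1,3,4)]
    have "integral (cbox x (x + \<delta> *\<^sub>R One)) f = integral (cbox x (x + \<delta> *\<^sub>R One)) h"
      using sub by (intro integral_cong) (auto simp: f_def)
    also have "\<dots> = 0"
      using sub ab by (intro integral_cbox_eq_0_if_orthogonal_to_test_funs[OF _ int zero]) auto
    finally have "norm (f x) < \<bar>h x\<bar>" using avg[of \<delta>] \<delta> by simp
    moreover have "x \<in> cbox a b" using x(1) box_subset_cbox by blast
    ultimately show False by (simp add: f_def)
  qed
  moreover have "negligible (N \<union> (cbox a b - box a b))"
    using N negligible_frontier_interval by (rule negligible_Un)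
  ultimately show ?thesis by blast
qed

lemma ae_zero_if_orthogonal_to_test_funs:
  fixes h :: "complex \<Rightarrow> real"
  assumes D: "open D"
    and int: "\<And>c d. cbox c d \<subseteq> D \<Longrightarrow> set_integrable lebesgue (cbox c d) h"
    and zero: "\<And>\<psi>. test_fun D \<psi> \<Longrightarrow> (LINT z:D|lebesgue. h z * \<psi> z) = 0"
  shows "\<exists>N. negligible N \<and> (\<forall>x\<in>D - N. h x = 0)"
proof -
  obtain \<D> where \<D>: "countable \<D>" "\<D> \<subseteq> Pow D" "\<And>X. X \<in> \<D> \<Longrightarrow> \<exists>a b. X = cbox a b"
    "\<Union>\<D> = D"
    using open_countable_Union_open_cbox[OF D] by metis
  have "\<exists>N. negligible N \<and> (\<forall>x\<in>X - N. h x = 0)" if X: "X \<in> \<D>" for X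
  proof -
    obtain a b where "X = cbox a b" using \<D>(3)[OF X] by blast
    moreover have "X \<subseteq> D" using \<D>(2) X by blast
    ultimately show ?thesis using ae_zero_on_cbox_if_orthogonal_to_test_funs[OF _ int zero] by blast
  qed
  then obtain NN where NN: "\<And>X. X \<in> \<D> \<Longrightarrow> negligible (NN X) \<and> (\<forall>x\<in>X - NN X. h x = 0)"
    by metis
  have "negligible (\<Union>(NN ` \<D>))" using \<D>(1) NN by (intro negligible_countable_Union) auto
  moreover have "\<forall>x\<in>D - \<Union>(NN ` \<D>). h x = 0" using NN \<D>(4) by blast
  ultimately show ?thesis by blast
qed

lemma weak_derivative_ae_eq_classical:
  fixes u g :: "complex \<Rightarrow> real"
  assumes D: "open D"
    and du: "\<And>z. z \<in> D \<Longrightarrow> u differentiable (at z)"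
    and cu: "continuous_on D (\<lambda>z. frechet_derivative u (at z) v)"
    and c\<psi>: "\<And>\<psi>. test_fun D \<psi> \<Longrightarrow> continuous_on UNIV (\<lambda>z. frechet_derivative \<psi> (at z) v)"
    and g: "set_integrable lebesgue D g"
    and weak: "\<And>\<psi>. test_fun D \<psi> \<Longrightarrow>
       (LINT z:D|lebesgue. u z * frechet_derivative \<psi> (at z) v) = - (LINT z:D|lebesgue. g z * \<psi> z)"
  shows "\<exists>N. negligible N \<and> (\<forall>z\<in>D - N. g z = frechet_derivative u (at z) v)"
proof -
  define Du where "Du = (\<lambda>z. frechet_derivative u (at z) v)"
  have int: "set_integrable lebesgue (cbox c d) (\<lambda>z. g z - Du z)" if cd: "cbox c d \<subseteq> D" for c d
  proof (rule set_integral_diff)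
    show "set_integrable lebesgue (cbox c d) g" by (rule set_integrable_subset[OF g _ cd]) simp
    show "set_integrable lebesgue (cbox c d) Du"
      using continuous_on_subset[OF cu cd] unfolding Du_def by (rule absolutely_integrable_continuous)
  qed
  have zero: "(LINT z:D|lebesgue. (g z - Du z) * \<psi> z) = 0" if \<psi>: "test_fun D \<psi>" for \<psi>
  proof -
    note by_parts = set_integral_by_parts_compact_support
      [OF D du cu test_funD(1)[OF \<psi>] c\<psi>[OF \<psi>] test_funD(5,6,7)[OF \<psi>]]
    have "(LINT z:D|lebesgue. (g z - Du z) * \<psi> z)
        = (LINT z:D|lebesgue. g z * \<psi> z) - (LINT z:D|lebesgue. Du z * \<psi> z)"
      using set_integral_diff(2)[OF set_integrable_mult_test_fun[OF g \<psi>] by_parts(2)]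
      unfolding Du_def by (simp add: left_diff_distrib)
    then show ?thesis using by_parts(3) weak[OF \<psi>] unfolding Du_def by linarith
  qed
  obtain N where N: "negligible N" "\<forall>x\<in>D - N. g x - Du x = 0"
    using ae_zero_if_orthogonal_to_test_funs[OF D int zero] by blast
  then have "\<forall>x\<in>D - N. g x = Du x" by simp
  with N(1) show ?thesis unfolding Du_def by blast
qed

section \<open>Energy densities and the inverse map\<close>

definition energy_density :: "real \<Rightarrow> (complex \<Rightarrow> complex) \<Rightarrow> complex \<Rightarrow> real" where
  "energy_density q f z =
     sqrt ((Re (pdx f z))\<^sup>2 + (Re (pdy f z))\<^sup>2) powr q +
     sqrt ((Im (pdx f z))\<^sup>2 + (Im (pdy f z))\<^sup>2) powr q"

lemma energy_eq_integral_energy_density: "energy q D f = (LINT z:D|lebesgue. energy_density q f z)"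
  by (simp add: energy_def energy_density_def)

lemma energy_density_nonneg: "0 \<le> energy_density q f z"
  by (simp add: energy_density_def)

lemma energy_density_1:
  "energy_density 1 f z =
     sqrt ((Re (pdx f z))\<^sup>2 + (Re (pdy f z))\<^sup>2) + sqrt ((Im (pdx f z))\<^sup>2 + (Im (pdy f z))\<^sup>2)"
  by (simp add: energy_density_def)

lemma linear_complex_expand:
  fixes L :: "complex \<Rightarrow> 'a::real_vector"
  assumes "linear L"
  shows "L x = Re x *\<^sub>R L 1 + Im x *\<^sub>R L \<i>"
proof -
  have "x = Re x *\<^sub>R 1 + Im x *\<^sub>R \<i>" by (simp add: complex_eq_iff)
  then have "L x = L (Re x *\<^sub>R 1 + Im x *\<^sub>R \<i>)" by (rule arg_cong)
  then show ?thesis using assms by (simp add: linear_add linear_scale)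
qed

text \<open>The matrix of B is the inverse of that of A, i.e. its entries are the cofactors of A divided
by the Jacobian.\<close>

lemma abs_plane_jacobian_mult_inverse_gradients:
  fixes A B :: "complex \<Rightarrow> complex"
  assumes B: "linear B" and BA: "B (A 1) = 1" "B (A \<i>) = \<i>"
  shows "\<bar>plane_jacobian A\<bar> *
      (sqrt ((Re (B 1))\<^sup>2 + (Re (B \<i>))\<^sup>2) + sqrt ((Im (B 1))\<^sup>2 + (Im (B \<i>))\<^sup>2))
    = cmod (A 1) + cmod (A \<i>)"
proof -
  define J where "J = plane_jacobian A"
  have "Re (A 1) *\<^sub>R B 1 + Im (A 1) *\<^sub>R B \<i> = 1" "Re (A \<i>) *\<^sub>R B 1 + Im (A \<i>) *\<^sub>R B \<i> = \<i>"
    using linear_complex_expand[OF B, of "A 1"] linear_complex_expand[OF B, of "A \<i>"] BA by simp_all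
  then have "Re (A 1) * Re (B 1) + Im (A 1) * Re (B \<i>) = 1"
    "Re (A 1) * Im (B 1) + Im (A 1) * Im (B \<i>) = 0"
    "Re (A \<i>) * Re (B 1) + Im (A \<i>) * Re (B \<i>) = 0"
    "Re (A \<i>) * Im (B 1) + Im (A \<i>) * Im (B \<i>) = 1"
    by (simp_all add: complex_eq_iff)
  then have cofactors: "J * Re (B 1) = Im (A \<i>)" "J * Re (B \<i>) = - Re (A \<i>)"
    "J * Im (B 1) = - Im (A 1)" "J * Im (B \<i>) = Re (A 1)"
    unfolding J_def plane_jacobian_def by algebra+
  have "\<bar>J\<bar> * sqrt (x\<^sup>2 + y\<^sup>2) = sqrt ((J * x)\<^sup>2 + (J * y)\<^sup>2)" for x y
    by (simp add: real_sqrt_mult[symmetric] power_mult_distrib algebra_simps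
        real_sqrt_abs[symmetric] del: real_sqrt_abs)
  then show ?thesis
    using cofactors unfolding J_def[symmetric] by (simp add: distrib_left cmod_def add.commute)
qed

lemma energy_density_inverse:
  fixes \<phi> :: "complex \<Rightarrow> complex"
  assumes D: "open D" and inj: "inj_on \<phi> D" and z: "z \<in> D"
    and d\<phi>: "\<phi> differentiable (at z)" and d\<psi>: "inv_into D \<phi> differentiable (at (\<phi> z))"
  shows "\<bar>plane_jacobian (frechet_derivative \<phi> (at z))\<bar> * energy_density 1 (inv_into D \<phi>) (\<phi> z)
     = cmod (pdx \<phi> z) + cmod (pdy \<phi> z)"
proof -
  define A where "A = frechet_derivative \<phi> (at z)"
  define B where "B = frechet_derivative (inv_into D \<phi>) (at (\<phi> z))"
  have A: "(\<phi> has_derivative A) (at z)" using d\<phi> frechet_derivative_works A_def by blast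
  have B: "(inv_into D \<phi> has_derivative B) (at (\<phi> z))" using d\<psi> frechet_derivative_works B_def by blast
  have "(inv_into D \<phi> \<circ> \<phi> has_derivative (\<lambda>x. x)) (at z)"
    using has_derivative_transform_within_open[of "\<lambda>x. x" "\<lambda>x. x" z UNIV D "inv_into D \<phi> \<circ> \<phi>"] D z inj
    by simp
  then have "B \<circ> A = (\<lambda>x. x)" using has_derivative_unique[OF diff_chain_at[OF A B]] by blast
  then show ?thesis
    using abs_plane_jacobian_mult_inverse_gradients[OF has_derivative_linear[OF B], of A]
    unfolding energy_density_1 pdx_def pdy_def A_def[symmetric] B_def[symmetric] by (simp add: fun_eq_iff)
qed

lemma cmod_pdx_add_cmod_pdy_le_energy_density:
  assumes p: "p > 0"
  shows "cmod (pdx f z) + cmod (pdy f z) \<le> 4 * energy_density p f z powr (1 / p)"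
proof -
  define gu where "gu = sqrt ((Re (pdx f z))\<^sup>2 + (Re (pdy f z))\<^sup>2)"
  define gv where "gv = sqrt ((Im (pdx f z))\<^sup>2 + (Im (pdy f z))\<^sup>2)"
  have "cmod (pdx f z) \<le> gu + gv" "cmod (pdy f z) \<le> gu + gv"
    using cmod_le[of "pdx f z"] cmod_le[of "pdy f z"] real_sqrt_ge_abs1 real_sqrt_ge_abs2
    unfolding gu_def gv_def by (smt (verit))+
  moreover have "g \<le> energy_density p f z powr (1 / p)" if "g \<ge> 0" "g powr p \<le> energy_density p f z" for g
  proof -
    have "g = (g powr p) powr (1 / p)" using that p by (simp add: powr_powr)
    also have "\<dots> \<le> energy_density p f z powr (1 / p)" using that p by (intro powr_mono2) auto
    finally show ?thesis .
  qed
  then have "gu \<le> energy_density p f z powr (1 / p)" "gv \<le> energy_density p f z powr (1 / p)"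
    unfolding energy_density_def gu_def gv_def by simp_all
  ultimately show ?thesis by linarith
qed

lemma sqrt_sum_squares_powr_le:
  fixes a b p :: real
  assumes p: "p > 0"
  shows "sqrt (a\<^sup>2 + b\<^sup>2) powr p \<le> 2 powr p * (\<bar>a\<bar> powr p + \<bar>b\<bar> powr p)"
proof -
  define m where "m = max \<bar>a\<bar> \<bar>b\<bar>"
  have "sqrt (a\<^sup>2 + b\<^sup>2) \<le> 2 * m"
    using sqrt_sum_squares_le_sum_abs[of a b] by (simp add: m_def)
  then have "sqrt (a\<^sup>2 + b\<^sup>2) powr p \<le> (2 * m) powr p" using p by (intro powr_mono2) auto
  also have "\<dots> = 2 powr p * m powr p" by (simp add: m_def powr_mult)
  also have "m powr p \<le> \<bar>a\<bar> powr p + \<bar>b\<bar> powr p"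
    by (cases "\<bar>a\<bar> \<le> \<bar>b\<bar>") (auto simp: m_def max_def)
  finally show ?thesis by simp
qed

section \<open>A Hoelder inequality on sets of finite measure\<close>

lemma powr_inverse_le_Young:
  fixes G t p :: real
  assumes p: "p > 1" and G: "G \<ge> 0" and t: "t > 0"
  shows "G powr (1 / p) \<le> (1 / p) * (G * t powr (1 - p)) + (1 - 1 / p) * t"
proof (cases "G = 0")
  case True then show ?thesis using p t by (simp add: field_simps)
next
  case False
  then have "(G * t powr (1 - p)) powr (1 / p) * t powr (1 - 1 / p)
      \<le> (1 / p) * (G * t powr (1 - p)) + (1 - 1 / p) * t"
    using p G t by (intro Youngs_inequality_0) auto
  moreover have "(G * t powr (1 - p)) powr (1 / p) * t powr (1 - 1 / p)
      = G powr (1 / p) * (t powr ((1 - p) / p) * t powr (1 - 1 / p))"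
    using G t by (simp add: powr_mult powr_powr)
  moreover have "t powr ((1 - p) / p) * t powr (1 - 1 / p) = 1"
    using t p by (simp add: powr_add[symmetric] field_simps)
  ultimately show ?thesis by simp
qed

lemma set_integrable_powr_inverse:
  fixes G :: "'a::euclidean_space \<Rightarrow> real"
  assumes p: "p > 1" and D: "D \<in> lmeasurable"
    and G: "set_integrable lebesgue D G" "\<And>z. G z \<ge> 0"
    and meas: "set_borel_measurable lebesgue D (\<lambda>z. G z powr (1 / p))"
  shows "set_integrable lebesgue D (\<lambda>z. G z powr (1 / p))"
proof (rule set_integrable_bound[OF set_integral_add(1)[OF absolutely_integrable_on_const[OF D] G(1)] meas])
  have "G z powr (1 / p) \<le> 1 + G z" for z
  proof -
    have "G z powr (1 / p) \<le> (1 / p) * G z + (1 - 1 / p)"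
      using powr_inverse_le_Young[OF p G(2)[of z], of 1] by simp
    moreover have "(1 / p) * G z \<le> 1 * G z" using p G(2)[of z] by (intro mult_right_mono) auto
    moreover have "0 \<le> 1 / p" using p by simp
    ultimately show ?thesis by linarith
  qed
  then show "AE z in lebesgue. z \<in> D \<longrightarrow> norm (G z powr (1 / p)) \<le> norm (1 + G z)"
    using G(2) by (simp add: AE_I2)
qed

lemma set_integral_powr_inverse_le_Young:
  fixes G :: "'a::euclidean_space \<Rightarrow> real"
  assumes p: "p > 1" and D: "D \<in> lmeasurable"
    and G: "set_integrable lebesgue D G" "\<And>z. G z \<ge> 0"
    and Gp: "set_integrable lebesgue D (\<lambda>z. G z powr (1 / p))"
    and t: "t > 0"
  shows "(LINT z:D|lebesgue. G z powr (1 / p))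
    \<le> (1 / p) * (t powr (1 - p) * (LINT z:D|lebesgue. G z)) + (1 - 1 / p) * t * measure lebesgue D"
proof -
  have c: "set_integrable lebesgue D (\<lambda>z. (1 - 1 / p) * t)"
    using absolutely_integrable_on_const[OF D] .
  have "(LINT z:D|lebesgue. G z powr (1 / p))
      \<le> (LINT z:D|lebesgue. (1 / p) * (G z * t powr (1 - p)) + (1 - 1 / p) * t)"
    using Gp G c powr_inverse_le_Young[OF p G(2) t]
    by (intro set_integral_mono set_integral_add set_integrable_mult_right set_integrable_mult_left) auto
  also have "\<dots> = (LINT z:D|lebesgue. (1 / p) * (G z * t powr (1 - p)))
      + (LINT z:D|lebesgue. (1 - 1 / p) * t)"
    using G c by (intro set_integral_add) (auto intro: set_integrable_mult_right set_integrable_mult_left)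
  also have "\<dots> = (1 / p) * (t powr (1 - p) * (LINT z:D|lebesgue. G z))
      + (1 - 1 / p) * t * measure lebesgue D"
    using D by (simp add: set_integral_mult_right set_integral_mult_left mult.commute fmeasurableD
        emeasure_eq_measure2 set_integral_const right_diff_distrib)
  finally show ?thesis .
qed

text \<open>Optimising the choice of t in the previous lemma.\<close>

lemma set_integral_powr_inverse_le:
  fixes G :: "'a::euclidean_space \<Rightarrow> real"
  assumes p: "p > 1" and D: "D \<in> lmeasurable"
    and G: "set_integrable lebesgue D G" "\<And>z. G z \<ge> 0"
    and Gp: "set_integrable lebesgue D (\<lambda>z. G z powr (1 / p))"
  shows "(LINT z:D|lebesgue. G z powr (1 / p))
    \<le> measure lebesgue D powr (1 - 1 / p) * (LINT z:D|lebesgue. G z) powr (1 / p)"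
proof -
  define I where "I = (LINT z:D|lebesgue. G z powr (1 / p))"
  define E where "E = (LINT z:D|lebesgue. G z)"
  define A where "A = measure lebesgue D"
  note bound = set_integral_powr_inverse_le_Young[OF p D G Gp, folded I_def E_def A_def]
  have "E \<ge> 0" unfolding E_def set_lebesgue_integral_def
    using G(2) by (intro Bochner_Integration.integral_nonneg) simp
  moreover have "A \<ge> 0" unfolding A_def by simp
  ultimately consider "A = 0" | "E = 0" "A > 0" | "E > 0" "A > 0" by linarith
  then have "I \<le> A powr (1 - 1 / p) * E powr (1 / p)"
  proof cases
    case 1
    have lim: "((\<lambda>t. (1 / p) * (t powr (1 - p) * E)) \<longlongrightarrow> (1 / p) * (0 * E)) at_top"
      using p by (intro tendsto_intros tendsto_neg_powr filterlim_ident) auto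
    have "eventually (\<lambda>t. I \<le> (1 / p) * (t powr (1 - p) * E)) at_top"
      using eventually_gt_at_top[of 0] by eventually_elim (use bound 1 in simp)
    from tendsto_lowerbound[OF lim this] have "I \<le> 0" by simp
    then show ?thesis using 1 by simp
  next
    case 2
    have lim: "((\<lambda>t. (1 - 1 / p) * t * A) \<longlongrightarrow> (1 - 1 / p) * 0 * A) (at_right 0)"
      by (intro tendsto_intros)
    have "eventually (\<lambda>t. I \<le> (1 - 1 / p) * t * A) (at_right 0)"
      using eventually_at_right_less[of "0::real"] by eventually_elim (use bound 2 in simp)
    from tendsto_lowerbound[OF lim this] have "I \<le> 0" by simp
    then show ?thesis using 2 by simp
  next
    case 3
    define r where "r = E / A"
    have r: "r > 0" "E = A * r" using 3 by (simp_all add: r_def)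
    have "(1 - p) / p + 1 = 1 / p" using p by (simp add: field_simps)
    then have "r powr ((1 - p) / p) * r powr 1 = r powr (1 / p)" by (simp only: powr_add[symmetric])
    then have e: "(r powr (1 / p)) powr (1 - p) * E = A * r powr (1 / p)"
      using r by (simp add: powr_powr)
    have "I \<le> (1 / p) * ((r powr (1 / p)) powr (1 - p) * E) + (1 - 1 / p) * r powr (1 / p) * A"
      using bound[of "r powr (1 / p)"] r by simp
    also have "\<dots> = A * r powr (1 / p)" unfolding e by (simp add: algebra_simps)
    also have "\<dots> = A powr (1 - 1 / p) * A powr (1 / p) * r powr (1 / p)"
      using 3 by (simp add: powr_add[symmetric])
    also have "\<dots> = A powr (1 - 1 / p) * E powr (1 / p)"
      using 3 r by (simp add: powr_mult)
    finally show ?thesis .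
  qed
  then show ?thesis unfolding I_def E_def A_def .
qed

section \<open>Sobolev regularity of continuously differentiable maps\<close>

lemma Lp_on_imp_set_integrable:
  fixes g :: "complex \<Rightarrow> real"
  assumes p: "p \<ge> 1" and D: "D \<in> lmeasurable" and L: "Lp_on p D g"
  shows "set_integrable lebesgue D g"
proof (rule set_integrable_bound)
  show "set_integrable lebesgue D (\<lambda>z. 1 + \<bar>g z\<bar> powr p)"
    using absolutely_integrable_on_const[OF D] L unfolding Lp_on_def by (intro set_integral_add) auto
  show "set_borel_measurable lebesgue D g" using L unfolding Lp_on_def by simp
  have "\<bar>g z\<bar> \<le> 1 + \<bar>g z\<bar> powr p" for z
  proof (cases "\<bar>g z\<bar> \<le> 1")
    case False
    then have "\<bar>g z\<bar> powr 1 \<le> \<bar>g z\<bar> powr p" using p by (intro powr_mono) auto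
    then show ?thesis using False by simp
  qed (simp add: add_increasing2)
  then show "AE z in lebesgue. z \<in> D \<longrightarrow> norm (g z) \<le> norm (1 + \<bar>g z\<bar> powr p)"
    by (simp add: AE_I2)
qed

lemma Lp_on_1_if_dominated:
  fixes f H :: "complex \<Rightarrow> real"
  assumes S: "open S" and f: "continuous_on S f" and H: "set_integrable lebesgue S H"
    and bound: "\<And>w. w \<in> S \<Longrightarrow> \<bar>f w\<bar> \<le> H w"
  shows "Lp_on 1 S f"
proof -
  have "set_integrable lebesgue S (\<lambda>w. \<bar>f w\<bar> powr 1)"
  proof (rule set_integrable_bound[OF H])
    show "set_borel_measurable lebesgue S (\<lambda>w. \<bar>f w\<bar> powr 1)"
      using f by (simp add: S set_borel_measurable_lebesgue_continuous_on_open continuous_on_rabs)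
    show "AE w in lebesgue. w \<in> S \<longrightarrow> norm (\<bar>f w\<bar> powr 1) \<le> norm (H w)"
      using bound by (intro AE_I2) force
  qed
  then show ?thesis
    unfolding Lp_on_def using set_borel_measurable_lebesgue_continuous_on_open[OF S f] by simp
qed

lemma
  fixes R :: "'b::real_normed_vector \<Rightarrow> real"
  assumes R: "bounded_linear R" and f: "f differentiable (at z)"
  shows differentiable_bounded_linear_comp: "(\<lambda>z. R (f z)) differentiable (at z)"
    and frechet_derivative_bounded_linear_comp:
      "frechet_derivative (\<lambda>z. R (f z)) (at z) v = R (frechet_derivative f (at z) v)"
proof -
  have d: "((\<lambda>z. R (f z)) has_derivative (\<lambda>h. R (frechet_derivative f (at z) h))) (at z)"
    using bounded_linear.has_derivative[OF R] f frechet_derivative_works by blast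
  then show "(\<lambda>z. R (f z)) differentiable (at z)" unfolding differentiable_def by blast
  show "frechet_derivative (\<lambda>z. R (f z)) (at z) v = R (frechet_derivative f (at z) v)"
    by (simp add: frechet_derivative_at[OF d, symmetric])
qed

lemma
  fixes f :: "complex \<Rightarrow> complex" and R :: "complex \<Rightarrow> real"
  assumes "open S" "bounded_linear R"
    and "\<And>z. z \<in> S \<Longrightarrow> f differentiable (at z)"
    and "continuous_on S (\<lambda>z. frechet_derivative f (at z) v)"
  shows differentiable_on_bounded_linear_comp: "\<And>z. z \<in> S \<Longrightarrow> (\<lambda>z. R (f z)) differentiable (at z)"
    and continuous_on_frechet_derivative_bounded_linear_comp:
      "continuous_on S (\<lambda>z. frechet_derivative (\<lambda>z. R (f z)) (at z) v)"
proof -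
  show "\<And>z. z \<in> S \<Longrightarrow> (\<lambda>z. R (f z)) differentiable (at z)"
    using assms by (simp add: differentiable_bounded_linear_comp)
  show "continuous_on S (\<lambda>z. frechet_derivative (\<lambda>z. R (f z)) (at z) v)"
    using bounded_linear.continuous_on[OF assms(2,4)]
    by (rule continuous_on_eq) (simp add: assms frechet_derivative_bounded_linear_comp)
qed

lemma set_integral_by_parts_test_fun:
  fixes f :: "complex \<Rightarrow> complex" and R :: "complex \<Rightarrow> real"
  assumes S: "open S" and R: "bounded_linear R"
    and df: "\<And>z. z \<in> S \<Longrightarrow> f differentiable (at z)"
    and cf: "continuous_on S (\<lambda>z. frechet_derivative f (at z) v)"
    and \<psi>: "test_fun S \<psi>" and c\<psi>: "continuous_on UNIV (\<lambda>z. frechet_derivative \<psi> (at z) v)"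
  shows "(LINT z:S|lebesgue. R (f z) * frechet_derivative \<psi> (at z) v) =
     - (LINT z:S|lebesgue. R (frechet_derivative f (at z) v) * \<psi> z)"
proof -
  note by_parts = set_integral_by_parts_compact_support
    [OF S differentiable_on_bounded_linear_comp[OF S R df cf]
      continuous_on_frechet_derivative_bounded_linear_comp[OF S R df cf]
      test_funD(1)[OF \<psi>] c\<psi> test_funD(5,6,7)[OF \<psi>]]
  have "(LINT z:S|lebesgue. frechet_derivative (\<lambda>z. R (f z)) (at z) v * \<psi> z) =
      (LINT z:S|lebesgue. R (frechet_derivative f (at z) v) * \<psi> z)"
    using sets_lebesgue_open[OF S]
    by (rule set_lebesgue_integral_cong) (simp add: R df frechet_derivative_bounded_linear_comp)
  then show ?thesis using by_parts(3) by simp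
qed

lemma integrable_classical_derivatives_if_W1p_real:
  fixes \<phi> :: "complex \<Rightarrow> complex" and R :: "complex \<Rightarrow> real"
  assumes D: "open D" "D \<in> lmeasurable" and p: "p \<ge> 1" and \<phi>: "C1_map_on \<phi> D"
    and R: "bounded_linear R" and W: "W1p_real p D (\<lambda>z. R (\<phi> z))"
  shows "set_integrable lebesgue D (\<lambda>z. \<bar>R (pdx \<phi> z)\<bar> powr p)"
    and "set_integrable lebesgue D (\<lambda>z. \<bar>R (pdy \<phi> z)\<bar> powr p)"
proof -
  have d\<phi>: "\<And>z. z \<in> D \<Longrightarrow> \<phi> differentiable (at z)"
    and c1: "continuous_on D (\<lambda>z. frechet_derivative \<phi> (at z) 1)"
    and ci: "continuous_on D (\<lambda>z. frechet_derivative \<phi> (at z) \<i>)"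
    using \<phi> unfolding C1_map_on_def pdx_def pdy_def by auto
  have classical: "set_integrable lebesgue D (\<lambda>z. \<bar>R (frechet_derivative \<phi> (at z) v)\<bar> powr p)"
    if c: "continuous_on D (\<lambda>z. frechet_derivative \<phi> (at z) v)"
      and c\<psi>: "\<And>\<psi>. test_fun D \<psi> \<Longrightarrow> continuous_on UNIV (\<lambda>z. frechet_derivative \<psi> (at z) v)"
      and g: "Lp_on p D g"
      and weak: "\<And>\<psi>. test_fun D \<psi> \<Longrightarrow>
        (LINT z:D|lebesgue. R (\<phi> z) * frechet_derivative \<psi> (at z) v) = - (LINT z:D|lebesgue. g z * \<psi> z)"
    for v g
  proof -
    obtain N where N: "negligible N" "\<forall>z\<in>D - N. g z = frechet_derivative (\<lambda>z. R (\<phi> z)) (at z) v"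
      using weak_derivative_ae_eq_classical[OF D(1) differentiable_on_bounded_linear_comp[OF D(1) R d\<phi> c]
          continuous_on_frechet_derivative_bounded_linear_comp[OF D(1) R d\<phi> c] c\<psi>
          Lp_on_imp_set_integrable[OF p D(2) g] weak]
      by blast
    have "AE z in lebesgue. z \<notin> N" using N(1) by (simp add: negligible_iff_null_sets AE_not_in)
    then have "AE z in lebesgue. z \<in> D \<longrightarrow>
        norm (\<bar>R (frechet_derivative \<phi> (at z) v)\<bar> powr p) \<le> norm (\<bar>g z\<bar> powr p)"
      by eventually_elim (use N(2) in \<open>simp add: R d\<phi> frechet_derivative_bounded_linear_comp\<close>)
    moreover have "continuous_on D (\<lambda>z. \<bar>R (frechet_derivative \<phi> (at z) v)\<bar> powr p)"
      using p by (intro continuous_on_powr' continuous_on_rabs bounded_linear.continuous_on[OF R c]) auto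
    ultimately show ?thesis
      using g unfolding Lp_on_def
      by (blast intro: set_integrable_bound set_borel_measurable_lebesgue_continuous_on_open[OF D(1)])
  qed
  obtain gx gy where gx: "Lp_on p D gx" "weak_pdx D (\<lambda>z. R (\<phi> z)) gx"
    and gy: "Lp_on p D gy" "weak_pdy D (\<lambda>z. R (\<phi> z)) gy"
    using W unfolding W1p_real_def by blast
  show "set_integrable lebesgue D (\<lambda>z. \<bar>R (pdx \<phi> z)\<bar> powr p)"
    using classical[OF c1 test_funD(2)[of D] gx(1)] gx(2) unfolding weak_pdx_def pdx_def by blast
  show "set_integrable lebesgue D (\<lambda>z. \<bar>R (pdy \<phi> z)\<bar> powr p)"
    using classical[OF ci test_funD(3)[of D] gy(1)] gy(2) unfolding weak_pdy_def pdy_def by blast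
qed

lemma energy_density_integrable_if_W1p:
  assumes D: "open D" "D \<in> lmeasurable" and p: "p \<ge> 1"
    and \<phi>: "C1_map_on \<phi> D" and W: "W1p p D \<phi>"
  shows "set_integrable lebesgue D (energy_density p \<phi>)"
proof (rule set_integrable_bound)
  note Re = integrable_classical_derivatives_if_W1p_real[OF D p \<phi> bounded_linear_Re]
  note Im = integrable_classical_derivatives_if_W1p_real[OF D p \<phi> bounded_linear_Im]
  show "set_integrable lebesgue D (\<lambda>z.
      2 powr p * (\<bar>Re (pdx \<phi> z)\<bar> powr p + \<bar>Re (pdy \<phi> z)\<bar> powr p) +
      2 powr p * (\<bar>Im (pdx \<phi> z)\<bar> powr p + \<bar>Im (pdy \<phi> z)\<bar> powr p))"
    using W unfolding W1p_def
    by (intro set_integral_add set_integrable_mult_right Re Im) auto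
  have "continuous_on D (pdx \<phi>)" "continuous_on D (pdy \<phi>)" using \<phi> by (simp_all add: C1_map_on_def)
  then show "set_borel_measurable lebesgue D (energy_density p \<phi>)"
    unfolding energy_density_def using p
    by (intro set_borel_measurable_lebesgue_continuous_on_open D continuous_intros continuous_on_powr')
      auto
  show "AE z in lebesgue. z \<in> D \<longrightarrow> norm (energy_density p \<phi> z) \<le> norm (
      2 powr p * (\<bar>Re (pdx \<phi> z)\<bar> powr p + \<bar>Re (pdy \<phi> z)\<bar> powr p) +
      2 powr p * (\<bar>Im (pdx \<phi> z)\<bar> powr p + \<bar>Im (pdy \<phi> z)\<bar> powr p))"
    using p by (intro AE_I2) (simp add: energy_density_def add_mono sqrt_sum_squares_powr_le)
qed

lemma abs_partials_le_energy_density_1: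
  shows "\<bar>Re (pdx f z)\<bar> \<le> energy_density 1 f z" "\<bar>Re (pdy f z)\<bar> \<le> energy_density 1 f z"
    and "\<bar>Im (pdx f z)\<bar> \<le> energy_density 1 f z" "\<bar>Im (pdy f z)\<bar> \<le> energy_density 1 f z"
  unfolding energy_density_1
  by (rule add_increasing2[OF real_sqrt_ge_zero real_sqrt_ge_abs1], simp,
      rule add_increasing2[OF real_sqrt_ge_zero real_sqrt_ge_abs2], simp,
      rule add_increasing[OF real_sqrt_ge_zero real_sqrt_ge_abs1], simp,
      rule add_increasing[OF real_sqrt_ge_zero real_sqrt_ge_abs2], simp)

lemma W1p_1_if_energy_density_integrable:
  assumes S: "open S" "S \<in> lmeasurable" and \<psi>: "C1_map_on \<psi> S" and bdd: "bounded (\<psi> ` S)"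
    and H: "set_integrable lebesgue S (energy_density 1 \<psi>)"
  shows "W1p 1 S \<psi>"
proof -
  have d\<psi>: "\<And>w. w \<in> S \<Longrightarrow> \<psi> differentiable (at w)"
    and cx: "continuous_on S (pdx \<psi>)" and cy: "continuous_on S (pdy \<psi>)"
    using \<psi> unfolding C1_map_on_def by auto
  have c\<psi>: "continuous_on S \<psi>"
    using d\<psi> by (auto intro!: continuous_at_imp_continuous_on differentiable_imp_continuous_within)
  obtain M where M: "\<And>w. w \<in> S \<Longrightarrow> cmod (\<psi> w) \<le> M" using bdd by (auto simp: bounded_iff)
  have "W1p_real 1 S (\<lambda>w. R (\<psi> w))"
    if R: "bounded_linear R" and R_le: "\<And>z. \<bar>R z\<bar> \<le> cmod z"
      and Hx: "\<And>w. \<bar>R (pdx \<psi> w)\<bar> \<le> energy_density 1 \<psi> w"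
      and Hy: "\<And>w. \<bar>R (pdy \<psi> w)\<bar> \<le> energy_density 1 \<psi> w"
    for R :: "complex \<Rightarrow> real"
  proof -
    have "\<bar>R (\<psi> w)\<bar> \<le> M" if "w \<in> S" for w using R_le[of "\<psi> w"] M[OF that] by linarith
    then have "Lp_on 1 S (\<lambda>w. R (\<psi> w))"
      by (rule Lp_on_1_if_dominated[OF S(1) bounded_linear.continuous_on[OF R c\<psi>]
            absolutely_integrable_on_const[OF S(2)]])
    moreover have "Lp_on 1 S (\<lambda>w. R (pdx \<psi> w))"
      by (rule Lp_on_1_if_dominated[OF S(1) bounded_linear.continuous_on[OF R cx] H Hx])
    moreover have "Lp_on 1 S (\<lambda>w. R (pdy \<psi> w))"
      by (rule Lp_on_1_if_dominated[OF S(1) bounded_linear.continuous_on[OF R cy] H Hy])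
    moreover have "weak_pdx S (\<lambda>w. R (\<psi> w)) (\<lambda>w. R (pdx \<psi> w))"
      using set_integral_by_parts_test_fun[OF S(1) R d\<psi> cx[unfolded pdx_def] _ test_funD(2)]
      unfolding weak_pdx_def pdx_def by blast
    moreover have "weak_pdy S (\<lambda>w. R (\<psi> w)) (\<lambda>w. R (pdy \<psi> w))"
      using set_integral_by_parts_test_fun[OF S(1) R d\<psi> cy[unfolded pdy_def] _ test_funD(3)]
      unfolding weak_pdy_def pdy_def by blast
    ultimately show ?thesis unfolding W1p_real_def by blast
  qed
  then have "W1p_real 1 S (\<lambda>w. Re (\<psi> w))" "W1p_real 1 S (\<lambda>w. Im (\<psi> w))"
    using abs_Re_le_cmod abs_Im_le_cmod bounded_linear_Re bounded_linear_Im
      abs_partials_le_energy_density_1 by presburger+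
  then show ?thesis unfolding W1p_def by blast
qed

section \<open>The energy estimate for the inverse\<close>

lemma energy_1_inverse_eq:
  assumes D: "open D" and Dstar: "open Dstar" and \<phi>: "C1_diffeomorphism \<phi> D Dstar"
    and int: "set_integrable lebesgue D (\<lambda>z. cmod (pdx \<phi> z) + cmod (pdy \<phi> z))"
  shows "set_integrable lebesgue Dstar (energy_density 1 (inv_into D \<phi>))"
    and "energy 1 Dstar (inv_into D \<phi>) = (LINT z:D|lebesgue. cmod (pdx \<phi> z) + cmod (pdy \<phi> z))"
proof -
  define J where "J = (\<lambda>z. \<bar>plane_jacobian (frechet_derivative \<phi> (at z))\<bar>)"
  have inj: "inj_on \<phi> D" and img: "\<phi> ` D = Dstar"
    and d\<phi>: "\<And>z. z \<in> D \<Longrightarrow> \<phi> differentiable (at z)"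
    and c\<phi>: "continuous_on D (pdx \<phi>)" "continuous_on D (pdy \<phi>)"
    and d\<psi>: "\<And>w. w \<in> Dstar \<Longrightarrow> inv_into D \<phi> differentiable (at w)"
    and c\<psi>: "continuous_on Dstar (pdx (inv_into D \<phi>))" "continuous_on Dstar (pdy (inv_into D \<phi>))"
    using \<phi> unfolding C1_diffeomorphism_def C1_map_on_def bij_betw_def by auto
  have pointwise: "J z * energy_density 1 (inv_into D \<phi>) (\<phi> z) = cmod (pdx \<phi> z) + cmod (pdy \<phi> z)"
    if "z \<in> D" for z
    unfolding J_def using energy_density_inverse[OF D inj that d\<phi>[OF that]] d\<psi> img that by blast
  have "continuous_on D (\<lambda>z. cmod (pdx \<phi> z) + cmod (pdy \<phi> z))"
    by (intro continuous_intros c\<phi>)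
  then have cont: "continuous_on D (\<lambda>z. J z * energy_density 1 (inv_into D \<phi>) (\<phi> z))"
    by (rule continuous_on_eq) (simp add: pointwise)
  have int': "set_integrable lebesgue D (\<lambda>z. J z * energy_density 1 (inv_into D \<phi>) (\<phi> z))"
    using int by (rule iffD1[OF set_integrable_cong, rotated 3]) (simp_all add: pointwise)
  have "continuous_on Dstar (energy_density 1 (inv_into D \<phi>))"
    unfolding energy_density_1 by (intro continuous_intros c\<psi>)
  note cov = set_integral_change_of_variables_complex[OF D _ _ inj cont[unfolded J_def]
      _ int'[unfolded J_def], unfolded img, OF Dstar _ this]
  show "set_integrable lebesgue Dstar (energy_density 1 (inv_into D \<phi>))"
    using cov(1) d\<phi> frechet_derivative_works by blast
  have "(LINT w:Dstar|lebesgue. energy_density 1 (inv_into D \<phi>) w)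
      = (LINT z:D|lebesgue. J z * energy_density 1 (inv_into D \<phi>) (\<phi> z))"
    unfolding J_def using cov(2) d\<phi> frechet_derivative_works by blast
  also have "\<dots> = (LINT z:D|lebesgue. cmod (pdx \<phi> z) + cmod (pdy \<phi> z))"
    by (rule set_lebesgue_integral_cong[OF sets_lebesgue_open[OF D]]) (simp add: pointwise)
  finally show "energy 1 Dstar (inv_into D \<phi>) = (LINT z:D|lebesgue. cmod (pdx \<phi> z) + cmod (pdy \<phi> z))"
    by (simp add: energy_eq_integral_energy_density)
qed

lemma set_integral_cmod_partials_le_energy:
  assumes D: "open D" "D \<in> lmeasurable" and p: "p > 1"
    and \<phi>: "C1_map_on \<phi> D" and W: "W1p p D \<phi>"
  shows "set_integrable lebesgue D (\<lambda>z. cmod (pdx \<phi> z) + cmod (pdy \<phi> z))"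
    and "(LINT z:D|lebesgue. cmod (pdx \<phi> z) + cmod (pdy \<phi> z))
      \<le> 4 * measure lebesgue D powr (1 - 1 / p) * energy p D \<phi> powr (1 / p)"
proof -
  let ?G = "energy_density p \<phi>" and ?F = "\<lambda>z. cmod (pdx \<phi> z) + cmod (pdy \<phi> z)"
  have G: "set_integrable lebesgue D ?G" "\<And>z. ?G z \<ge> 0"
    using energy_density_integrable_if_W1p[OF D] p \<phi> W by (simp_all add: energy_density_nonneg)
  have "continuous_on D (\<lambda>z. ?G z powr (1 / p))"
    using \<phi> p unfolding C1_map_on_def energy_density_def
    by (intro continuous_on_powr' continuous_intros) auto
  then have Gp: "set_integrable lebesgue D (\<lambda>z. ?G z powr (1 / p))"
    using set_integrable_powr_inverse[OF p D(2) G]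
      set_borel_measurable_lebesgue_continuous_on_open[OF D(1)]
    by blast
  have F_le: "?F z \<le> 4 * ?G z powr (1 / p)" for z
    using cmod_pdx_add_cmod_pdy_le_energy_density p by simp
  show F: "set_integrable lebesgue D ?F"
    using \<phi> F_le unfolding C1_map_on_def
    by (intro set_integrable_bound[OF set_integrable_mult_right[OF Gp, of 4]]
        set_borel_measurable_lebesgue_continuous_on_open[OF D(1)] continuous_intros)
      (auto intro!: AE_I2)
  have "(LINT z:D|lebesgue. ?F z) \<le> (LINT z:D|lebesgue. 4 * ?G z powr (1 / p))"
    using F_le by (intro set_integral_mono F) (auto intro: Gp)
  also have "\<dots> \<le> 4 * (measure lebesgue D powr (1 - 1 / p) * energy p D \<phi> powr (1 / p))"
    using set_integral_powr_inverse_le[OF p D(2) G Gp]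
    by (simp add: energy_eq_integral_energy_density)
  finally show "(LINT z:D|lebesgue. ?F z)
      \<le> 4 * measure lebesgue D powr (1 - 1 / p) * energy p D \<phi> powr (1 / p)"
    by (simp add: mult.assoc)
qed

theorem mainTheorem10:
  fixes D Dstar :: "complex set" and p :: real and \<phi> :: "complex \<Rightarrow> complex"
  assumes "open D" "connected D" "bounded D"
    and "open Dstar" "connected Dstar" "bounded Dstar"
    and "1 < p"
    and "C1_diffeomorphism \<phi> D Dstar"
    and "W1p p D \<phi>"
  shows "W1p 1 Dstar (inv_into D \<phi>) \<and>
    energy 1 Dstar (inv_into D \<phi>)
      \<le> 4 * (measure lebesgue D) powr (1 - 1 / p) * (energy p D \<phi>) powr (1 / p)"
proof -
  have D: "open D" "D \<in> lmeasurable" and Dstar: "open Dstar" "Dstar \<in> lmeasurable"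
    and \<phi>: "C1_map_on \<phi> D" and \<psi>: "C1_map_on (inv_into D \<phi>) Dstar"
    and "inv_into D \<phi> ` Dstar \<subseteq> D"
    using assms lmeasurable_open unfolding C1_diffeomorphism_def bij_betw_def by auto
  then have bounded_\<psi>: "bounded (inv_into D \<phi> ` Dstar)" using assms(3) bounded_subset by blast
  note estimate = set_integral_cmod_partials_le_energy[OF D assms(7) \<phi> assms(9)]
  note inverse = energy_1_inverse_eq[OF D(1) Dstar(1) assms(8) estimate(1)]
  show ?thesis
    using W1p_1_if_energy_density_integrable[OF Dstar \<psi> bounded_\<psi> inverse(1)] inverse(2) estimate(2)
    by simp
qed

end
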